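(* Let $G$ be an admissible kernel and let $h:\mathbb R\to\mathbb R$ be differentiable with bounded derivative. Then the operator $\mathbf H_{\phi,\varrho}$ is positive semi-definite, i.e. $\langle u,\mathbf H_{\phi,\varrho}u\rangle\ge0$ for all $u\in\mathcal L^2$. Consequently, if $\mathbf A$ is monotone (i.e. $\langle u-v,\mathbf A(u)-\mathbf A(v)\rangle\ge0$ for all $u,v\in\mathcal L^2$), then $\mathcal J$ is $\gamma$-strongly concave on $\mathcal L^2$, meaning $$\mathcal J(\theta u+(1-\theta)v)\ge\theta\mathcal J(u)+(1-\theta)\mathcal J(v)+\tfrac{\gamma\theta(1-\theta)}2\|u-v\|^2\quad\text{for all }u,v\in\mathcal L^2,\ \theta\in(0,1).$$
   Context: Fix $T>0$ and a filtered probability space $(\Omega,\mathcal F,(\mathcal F_t)_{t\in[0,T]},\mathbb P)$ satisfying the usual conditions; $\mathbb E_t$ denotes conditional expectation given $\mathcal F_t$. Let $\mathcal L^2$ be the Hilbert space of progressively measurable $f:[0,T]\times\Omega\to\mathbb R$ with $\mathbb E\int_0^T f_t^2\,dt<\infty$, with inner product $\langle f,g\rangle=\mathbb E\int_0^T f_tg_t\,dt$ and norm $\|f\|$. A Volterra kernel $G:[0,T]^2\to\mathbb R$ (i.e. $G(t,s)=0$ for $s>t$) is admissible if $C_G:=\sup_{t\in[0,T]}\int_0^t|G(t,s)|^2ds<\infty$; it induces $(\mathbf Gu)_t=\int_0^tG(t,s)u_s\,ds$ with adjoint $(\mathbf G^*u)_t=\int_t^TG(s,t)\mathbb E_t[u_s]\,ds$.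 Model data: constants $X_0>0$, $\gamma>0$, $\phi,\varrho\ge0$; a process $S\in\mathcal L^2$ with $S_T\in L^2(\Omega,\mathcal F_T,\mathbb P)$; a process $g\in\mathcal L^2$. For $u\in\mathcal L^2$ set $X^u_t=X_0+\int_0^tu_s\,ds$, $Z^u_t=g_t+(\mathbf Gu)_t$, and let $\alpha_t=\mathbb E_t[S_T-S_t]$. The performance functional is $$\mathcal J(u)=\mathbb E\Big[\int_0^T\big(\alpha_t-\tfrac\gamma2u_t-h(Z^u_t)\big)u_t\,dt-\tfrac\phi2\int_0^T(X^u_t)^2dt-\tfrac\varrho2(X^u_T)^2\Big]+X_0\mathbb E[S_T].$$ $(\mathbf A(u))_t=h(Z^u_t)+\int_t^TG(s,t)\mathbb E_t[h'(Z^u_s)u_s]\,ds$. The kernel $H_{\phi,\varrho}(t,s)=(\phi(T-t)+\varrho)\mathbb 1_{\{t>s\}}$ induces the operator $\mathbf H_{\phi,\varrho}$. *)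

theory Defs
  imports "HOL-Probability.Probability"
begin

type_synonym 'a proc = "real \<Rightarrow> 'a \<Rightarrow> real"

definition filtered_prob_space :: "'a measure \<Rightarrow> (real \<Rightarrow> 'a measure) \<Rightarrow> real \<Rightarrow> bool" where
  "filtered_prob_space M F T \<longleftrightarrow> prob_space M \<and>
     (\<forall>t\<in>{0..T}. subalgebra M (F t)) \<and>
     (\<forall>s t. 0 \<le> s \<and> s \<le> t \<and> t \<le> T \<longrightarrow> sets (F s) \<subseteq> sets (F t))"

definition usual_conditions :: "'a measure \<Rightarrow> (real \<Rightarrow> 'a measure) \<Rightarrow> real \<Rightarrow> bool" where
  "usual_conditions M F T \<longleftrightarrow>
     (\<forall>A B. B \<in> null_sets M \<and> A \<subseteq> B \<longrightarrow> A \<in> sets (F 0)) \<and>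
     (\<forall>t\<in>{0..<T}. sets (F t) = (\<Inter>s\<in>{t<..T}. sets (F s)))"

definition progressive :: "(real \<Rightarrow> 'a measure) \<Rightarrow> real \<Rightarrow> 'a proc \<Rightarrow> bool" where
  "progressive F T f \<longleftrightarrow>
     (\<forall>t\<in>{0..T}. (\<lambda>(s, \<omega>). f s \<omega>) \<in> borel_measurable (restrict_space lborel {0..t} \<Otimes>\<^sub>M F t))"

definition PM :: "'a measure \<Rightarrow> real \<Rightarrow> (real \<times> 'a) measure" where
  "PM M T = restrict_space lborel {0..T} \<Otimes>\<^sub>M M"

text \<open>The space \<L>^2 (as a set of representatives).\<close>
definition L2 :: "'a measure \<Rightarrow> (real \<Rightarrow> 'a measure) \<Rightarrow> real \<Rightarrow> 'a proc set" where
  "L2 M F T = {f. progressive F T f \<and> integrable (PM M T) (\<lambda>(s, \<omega>). (f s \<omega>)\<^sup>2)}"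

definition ip :: "'a measure \<Rightarrow> real \<Rightarrow> 'a proc \<Rightarrow> 'a proc \<Rightarrow> real" where
  "ip M T f g = integral\<^sup>L (PM M T) (\<lambda>(s, \<omega>). f s \<omega> * g s \<omega>)"

definition nrm :: "'a measure \<Rightarrow> real \<Rightarrow> 'a proc \<Rightarrow> real" where
  "nrm M T f = sqrt (ip M T f f)"

definition padd :: "'a proc \<Rightarrow> 'a proc \<Rightarrow> 'a proc" where
  "padd u v = (\<lambda>t \<omega>. u t \<omega> + v t \<omega>)"

definition pdiff :: "'a proc \<Rightarrow> 'a proc \<Rightarrow> 'a proc" where
  "pdiff u v = (\<lambda>t \<omega>. u t \<omega> - v t \<omega>)"

definition pscale :: "real \<Rightarrow> 'a proc \<Rightarrow> 'a proc" where
  "pscale c u = (\<lambda>t \<omega>. c * u t \<omega>)"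

definition admissible_kernel :: "real \<Rightarrow> (real \<Rightarrow> real \<Rightarrow> real) \<Rightarrow> bool" where
  "admissible_kernel T G \<longleftrightarrow>
     (\<lambda>(t, s). G t s) \<in> borel_measurable (lborel \<Otimes>\<^sub>M lborel) \<and>
     (\<forall>t\<in>{0..T}. \<forall>s\<in>{0..T}. t < s \<longrightarrow> G t s = 0) \<and>
     (\<exists>C::real. \<forall>t\<in>{0..T}.
        (\<integral>\<^sup>+ s. ennreal ((G t s)\<^sup>2) * indicator {0..t} s \<partial>lborel) \<le> ennreal C)"

definition volt :: "(real \<Rightarrow> real \<Rightarrow> real) \<Rightarrow> 'a proc \<Rightarrow> 'a proc" where
  "volt K u = (\<lambda>t \<omega>. (LINT s:{0..t}|lborel. K t s * u s \<omega>))"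

definition Hker :: "real \<Rightarrow> real \<Rightarrow> real \<Rightarrow> real \<Rightarrow> real \<Rightarrow> real" where
  "Hker T phi rho t s = (if s < t then phi * (T - t) + rho else 0)"

definition Xproc :: "real \<Rightarrow> 'a proc \<Rightarrow> 'a proc" where
  "Xproc X0 u = (\<lambda>t \<omega>. X0 + (LINT s:{0..t}|lborel. u s \<omega>))"

definition Zproc :: "'a proc \<Rightarrow> (real \<Rightarrow> real \<Rightarrow> real) \<Rightarrow> 'a proc \<Rightarrow> 'a proc" where
  "Zproc g G u = (\<lambda>t \<omega>. g t \<omega> + volt G u t \<omega>)"

definition alpha_version ::
  "'a measure \<Rightarrow> (real \<Rightarrow> 'a measure) \<Rightarrow> real \<Rightarrow> 'a proc \<Rightarrow> 'a proc \<Rightarrow> bool" where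
  "alpha_version M F T S alpha \<longleftrightarrow> progressive F T alpha \<and>
     (\<forall>t\<in>{0..T}. AE \<omega> in M.
        alpha t \<omega> = real_cond_exp M (F t) (\<lambda>\<omega>'. S T \<omega>' - S t \<omega>') \<omega>)"

definition J :: "'a measure \<Rightarrow> real \<Rightarrow> real \<Rightarrow> real \<Rightarrow> real \<Rightarrow> real \<Rightarrow> 'a proc \<Rightarrow> 'a proc
    \<Rightarrow> (real \<Rightarrow> real) \<Rightarrow> (real \<Rightarrow> real \<Rightarrow> real) \<Rightarrow> 'a proc \<Rightarrow> 'a proc \<Rightarrow> real" where
  "J M T X0 gam phi rho S alpha h G g u =
     (\<integral>\<omega>. (LINT t:{0..T}|lborel.
               (alpha t \<omega> - gam / 2 * u t \<omega> - h (Zproc g G u t \<omega>)) * u t \<omega>)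
          - phi / 2 * (LINT t:{0..T}|lborel. (Xproc X0 u t \<omega>)\<^sup>2)
          - rho / 2 * (Xproc X0 u T \<omega>)\<^sup>2 \<partial>M)
     + X0 * (\<integral>\<omega>. S T \<omega> \<partial>M)"

text \<open>Aop is a (progressive version of the) operator
  A(u)_t = h(Z^u_t) + int_t^T G(s,t) E_t[h'(Z^u_s) u_s] ds
  (the conditional expectation is pulled out of the ds-integral, by conditional Fubini).\<close>
definition A_version :: "'a measure \<Rightarrow> (real \<Rightarrow> 'a measure) \<Rightarrow> real \<Rightarrow> (real \<Rightarrow> real)
    \<Rightarrow> (real \<Rightarrow> real) \<Rightarrow> (real \<Rightarrow> real \<Rightarrow> real) \<Rightarrow> 'a proc \<Rightarrow> ('a proc \<Rightarrow> 'a proc) \<Rightarrow> bool" where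
  "A_version M F T h h' G g Aop \<longleftrightarrow>
     (\<forall>u\<in>L2 M F T. progressive F T (Aop u) \<and>
        (\<forall>t\<in>{0..T}. AE \<omega> in M.
           Aop u t \<omega> = h (Zproc g G u t \<omega>)
             + real_cond_exp M (F t)
                 (\<lambda>\<omega>'. (LINT s:{t..T}|lborel. G s t * (h' (Zproc g G u s \<omega>') * u s \<omega>'))) \<omega>))"

definition monotone_op :: "'a measure \<Rightarrow> (real \<Rightarrow> 'a measure) \<Rightarrow> real \<Rightarrow> ('a proc \<Rightarrow> 'a proc) \<Rightarrow> bool" where
  "monotone_op M F T Aop \<longleftrightarrow>
     (\<forall>u\<in>L2 M F T. \<forall>v\<in>L2 M F T. ip M T (pdiff u v) (pdiff (Aop u) (Aop v)) \<ge> 0)"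

end

theory Submission
  imports Defs
begin

text \<open>
  Both claims are proved path by path and then integrated over the probability space.

  For the first, let Y t = int_0^t u_s ds. The part rho u_t Y_t of the integrand integrates to
  rho (Y T)^2 / 2, and writing T - t = int_t^T dr, Fubini turns the integral of the part
  phi (T - t) u_t Y_t into phi int_0^T (Y r)^2 / 2 dr.

  For the second, J splits into a term linear in u, the term -gam/2 |u|^2, which is exactly
  gam-strongly concave, the inventory penalties, which are concave because X^u is affine in u,
  and minus the impact term Phi u = <u, h(Z^u)>. Along the segment p_y = y u + (1 - y) v,
  differentiation under the integral sign (h' is bounded) gives
  d/dy Phi p_y = <u - v, h(Z^p_y)> + <h'(Z^p_y) p_y, G (u - v)>. Moving G to the other side
  by Fubini and inserting the conditional expectation, which is harmless because u - v is
  progressive, this becomes <u - v, A p_y>. By monotonicity of A it is nondecreasing in y,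
  so Phi is convex along segments.
\<close>

lemma power2_lincomb_le: "(a * x + b * y)\<^sup>2 \<le> 2 * a\<^sup>2 * x\<^sup>2 + 2 * b\<^sup>2 * (y::real)\<^sup>2"
proof -
  have "0 \<le> (a * x - b * y)\<^sup>2" by simp
  then show ?thesis by (simp add: power2_sum power2_diff power_mult_distrib)
qed

lemma power2_convex_comb:
  "(\<theta> * a + (1 - \<theta>) * b)\<^sup>2 = \<theta> * a\<^sup>2 + (1 - \<theta>) * b\<^sup>2 - \<theta> * (1 - \<theta>) * (a - b)\<^sup>2" for a b \<theta> :: real
  by (simp add: power2_eq_square algebra_simps)

lemma power2_convex_comb_le:
  fixes a b \<theta> :: real
  assumes "0 \<le> \<theta>" "\<theta> \<le> 1"
  shows "(\<theta> * a + (1 - \<theta>) * b)\<^sup>2 \<le> \<theta> * a\<^sup>2 + (1 - \<theta>) * b\<^sup>2"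
  unfolding power2_convex_comb using assms by simp

lemma integrable_mult_of_square_integrable:
  fixes f g :: "'b \<Rightarrow> real"
  assumes [measurable]: "f \<in> borel_measurable Q" "g \<in> borel_measurable Q"
    and "integrable Q (\<lambda>x. (f x)\<^sup>2)" "integrable Q (\<lambda>x. (g x)\<^sup>2)"
  shows "integrable Q (\<lambda>x. f x * g x)"
proof (rule Bochner_Integration.integrable_bound)
  show "integrable Q (\<lambda>x. (f x)\<^sup>2 + (g x)\<^sup>2)" using assms by auto
  have "\<bar>f x * g x\<bar> \<le> (f x)\<^sup>2 + (g x)\<^sup>2" for x
    using power2_lincomb_le[of 1 "\<bar>f x\<bar>" "-1" "\<bar>g x\<bar>"] zero_le_power2[of "\<bar>f x\<bar> - \<bar>g x\<bar>"]
    by (simp add: abs_mult power2_diff)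
  then show "AE x in Q. norm (f x * g x) \<le> norm ((f x)\<^sup>2 + (g x)\<^sup>2)" by simp
qed simp

lemma square_integral_mult_le_nn_integral:
  fixes f g :: "'b \<Rightarrow> real"
  assumes [measurable]: "f \<in> borel_measurable Q" "g \<in> borel_measurable Q"
  shows "ennreal ((\<integral>x. f x * g x \<partial>Q)\<^sup>2)
    \<le> (\<integral>\<^sup>+ x. ennreal ((f x)\<^sup>2) \<partial>Q) * (\<integral>\<^sup>+ x. ennreal ((g x)\<^sup>2) \<partial>Q)"
proof -
  have abs_le: "ennreal \<bar>\<integral>x. f x * g x \<partial>Q\<bar> \<le> (\<integral>\<^sup>+ x. ennreal \<bar>f x\<bar> * ennreal \<bar>g x\<bar> \<partial>Q)"
    using integral_norm_bound_ennreal[of Q "\<lambda>x. f x * g x"]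
    by (cases "integrable Q (\<lambda>x. f x * g x)")
       (auto simp: not_integrable_integral_eq abs_mult ennreal_mult)
  have "ennreal ((\<integral>x. f x * g x \<partial>Q)\<^sup>2) = (ennreal \<bar>\<integral>x. f x * g x \<partial>Q\<bar>)\<^sup>2"
    by (simp add: ennreal_power)
  also have "\<dots> \<le> (\<integral>\<^sup>+ x. ennreal \<bar>f x\<bar> * ennreal \<bar>g x\<bar> \<partial>Q)\<^sup>2"
    using abs_le by (intro power_mono) auto
  also have "\<dots> \<le> (\<integral>\<^sup>+ x. ennreal \<bar>f x\<bar> ^ 2 \<partial>Q) * (\<integral>\<^sup>+ x. ennreal \<bar>g x\<bar> ^ 2 \<partial>Q)"
    by (rule Cauchy_Schwarz_nn_integral) auto
  finally show ?thesis by (simp add: ennreal_power)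
qed

lemma (in sigma_finite_subalgebra) nn_integral_abs_mult_real_cond_exp_le:
  assumes [measurable]: "f \<in> borel_measurable F" "g \<in> borel_measurable M"
  shows "(\<integral>\<^sup>+ x. ennreal \<bar>f x\<bar> * ennreal \<bar>real_cond_exp M F g x\<bar> \<partial>M)
    \<le> (\<integral>\<^sup>+ x. ennreal \<bar>f x\<bar> * ennreal \<bar>g x\<bar> \<partial>M)"
proof -
  have "(\<integral>\<^sup>+ x. ennreal \<bar>f x\<bar> * ennreal \<bar>real_cond_exp M F g x\<bar> \<partial>M)
      \<le> (\<integral>\<^sup>+ x. ennreal \<bar>f x\<bar> * nn_cond_exp M F (\<lambda>y. ennreal \<bar>g y\<bar>) x \<partial>M)"
    using real_cond_exp_abs[of g]
    by (intro nn_integral_mono_AE) (auto elim!: AE_mp intro!: mult_left_mono)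
  also have "\<dots> = (\<integral>\<^sup>+ x. ennreal \<bar>f x\<bar> * ennreal \<bar>g x\<bar> \<partial>M)"
    by (rule nn_cond_exp_intg) measurable
  finally show ?thesis .
qed

lemma (in sigma_finite_subalgebra) nn_integral_square_real_cond_exp_le:
  assumes "finite_measure M" and X [measurable]: "X \<in> borel_measurable M"
  shows "(\<integral>\<^sup>+ x. ennreal ((real_cond_exp M F X x)\<^sup>2) \<partial>M) \<le> (\<integral>\<^sup>+ x. ennreal ((X x)\<^sup>2) \<partial>M)"
proof (cases "integrable M (\<lambda>x. (X x)\<^sup>2)")
  case False
  then have "(\<integral>\<^sup>+ x. ennreal ((X x)\<^sup>2) \<partial>M) = \<infinity>"
    by (auto simp: integrable_iff_bounded less_top[symmetric])
  then show ?thesis by simp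
next
  case True
  have X_int: "integrable M X"
    using finite_measure.square_integrable_imp_integrable[OF assms True] .
  have jensen: "AE x in M. (real_cond_exp M F X x)\<^sup>2 \<le> real_cond_exp M F (\<lambda>x. (X x)\<^sup>2) x"
    using real_cond_exp_jensens_inequality(2)[of X UNIV 0 0 power2] X_int True convex_power2 by auto
  have cond_int: "integrable M (\<lambda>x. (real_cond_exp M F X x)\<^sup>2)"
    using integrable_convex_cond_exp[of X UNIV 0 0 power2] X_int True convex_power2 by auto
  have "(\<integral>\<^sup>+ x. ennreal ((real_cond_exp M F X x)\<^sup>2) \<partial>M) = ennreal (\<integral>x. (real_cond_exp M F X x)\<^sup>2 \<partial>M)"
    by (rule nn_integral_eq_integral[OF cond_int]) simp
  also have "\<dots> \<le> ennreal (\<integral>x. real_cond_exp M F (\<lambda>x. (X x)\<^sup>2) x \<partial>M)"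
    by (intro ennreal_leI integral_mono_AE cond_int jensen real_cond_exp_int(1)[OF True])
  also have "\<dots> = (\<integral>\<^sup>+ x. ennreal ((X x)\<^sup>2) \<partial>M)"
    using nn_integral_eq_integral[OF True] real_cond_exp_int(2)[OF True] by simp
  finally show ?thesis .
qed

definition pconv :: "real \<Rightarrow> 'a proc \<Rightarrow> 'a proc \<Rightarrow> 'a proc" where
  "pconv y u v = padd (pscale y u) (pscale (1 - y) v)"

lemma pconv_apply [simp]: "pconv y u v t \<omega> = y * u t \<omega> + (1 - y) * v t \<omega>"
  by (simp add: pconv_def padd_def pscale_def)

lemma pconv_1 [simp]: "pconv 1 u v = u" and pconv_0 [simp]: "pconv 0 u v = v"
  by (simp_all add: fun_eq_iff)

lemma pdiff_apply [simp]: "pdiff u v t \<omega> = u t \<omega> - v t \<omega>"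
  by (simp add: pdiff_def)

section \<open>Functions with bounded derivative\<close>

locale bounded_derivative =
  fixes h h' :: "real \<Rightarrow> real" and B :: real
  assumes has_deriv: "\<And>x. (h has_real_derivative h' x) (at x)"
    and deriv_bound: "\<And>x. \<bar>h' x\<bar> \<le> B"
begin

lemma bound_nonneg: "0 \<le> B"
  using deriv_bound[of 0] by linarith

lemma borel_measurable_h [measurable]: "h \<in> borel_measurable borel"
  using has_deriv
  by (intro borel_measurable_continuous_onI DERIV_continuous_on)
     (auto intro: has_field_derivative_at_within)

lemma borel_measurable_h' [measurable]: "h' \<in> borel_measurable borel"
proof (rule borel_measurable_LIMSEQ_real)
  fix x :: real
  have "((\<lambda>y. (h y - h x) / (y - x)) \<longlongrightarrow> h' x) (at x)"
    using has_deriv[of x] by (simp add: has_field_derivative_iff)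
  then have lim: "\<forall>X. (\<forall>i. X i \<in> UNIV - {x}) \<longrightarrow> X \<longlonglongrightarrow> x \<longrightarrow> ((\<lambda>y. (h y - h x) / (y - x)) \<circ> X) \<longlonglongrightarrow> h' x"
    unfolding tendsto_at_iff_sequentially .
  have "(\<lambda>i. x + inverse (real (Suc i))) \<longlonglongrightarrow> x"
    using tendsto_add[OF tendsto_const LIMSEQ_inverse_real_of_nat, of x] by simp
  with lim have "((\<lambda>y. (h y - h x) / (y - x)) \<circ> (\<lambda>i. x + inverse (real (Suc i)))) \<longlonglongrightarrow> h' x"
    by simp
  then show "(\<lambda>i. (h (x + inverse (real (Suc i))) - h x) / (x + inverse (real (Suc i)) - x)) \<longlonglongrightarrow> h' x"
    by (simp add: comp_def)
qed measurable

lemma lipschitz: "\<bar>h x - h y\<bar> \<le> B * \<bar>x - y\<bar>"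
proof -
  have *: "\<bar>h b - h a\<bar> \<le> B * \<bar>b - a\<bar>" if ab: "a < b" for a b
  proof -
    obtain z where "h b - h a = (b - a) * h' z"
      using MVT2[OF ab, of h h'] has_deriv by blast
    then have "\<bar>h b - h a\<bar> = \<bar>b - a\<bar> * \<bar>h' z\<bar>" by (simp add: abs_mult)
    also have "\<dots> \<le> \<bar>b - a\<bar> * B" by (intro mult_left_mono deriv_bound) simp
    finally show ?thesis by (simp add: mult.commute)
  qed
  show ?thesis
    using *[of x y] *[of y x] by (cases x y rule: linorder_cases) (auto simp: abs_minus_commute)
qed

lemma abs_le_linear: "\<bar>h x\<bar> \<le> \<bar>h 0\<bar> + B * \<bar>x\<bar>"
  using lipschitz[of x 0] abs_triangle_ineq[of "h x - h 0" "h 0"] by simp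

lemma has_real_derivative_along_line:
  "((\<lambda>y. h (a + y * b) * (c + y * d)) has_real_derivative
      h' (a + x * b) * b * (c + x * d) + h (a + x * b) * d) (at x)"
proof -
  have "((\<lambda>y. h (a + y * b)) has_real_derivative h' (a + x * b) * b) (at x)"
    by (rule DERIV_chain2[OF has_deriv]) (auto intro!: derivative_eq_intros)
  moreover have "((\<lambda>y. c + y * d) has_real_derivative d) (at x)"
    by (auto intro!: derivative_eq_intros)
  ultimately show ?thesis
    using DERIV_mult by (fastforce simp: mult.commute)
qed

lemma difference_quotient_along_line_le:
  assumes yx: "y \<noteq> x" and R: "\<bar>y\<bar> \<le> R"
  shows "\<bar>(h (a + y * b) * (c + y * d) - h (a + x * b) * (c + x * d)) / (y - x)\<bar>
     \<le> B * (\<bar>b\<bar> * \<bar>c\<bar>) + B * R * (\<bar>b\<bar> * \<bar>d\<bar>) + \<bar>h (a + x * b) * d\<bar>"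
proof -
  define q where "q = (h (a + y * b) - h (a + x * b)) / (y - x)"
  have split: "(h (a + y * b) * (c + y * d) - h (a + x * b) * (c + x * d)) / (y - x)
      = q * (c + y * d) + h (a + x * b) * d"
    using yx by (simp add: q_def field_simps)
  have "(a + y * b) - (a + x * b) = b * (y - x)" by (simp add: algebra_simps)
  then have "\<bar>h (a + y * b) - h (a + x * b)\<bar> \<le> B * \<bar>b\<bar> * \<bar>y - x\<bar>"
    using lipschitz[of "a + y * b" "a + x * b"] by (simp add: abs_mult mult.assoc)
  then have q: "\<bar>q\<bar> \<le> B * \<bar>b\<bar>"
    using yx by (simp add: q_def abs_divide divide_le_eq)
  have "\<bar>c + y * d\<bar> \<le> \<bar>c\<bar> + R * \<bar>d\<bar>"
    using abs_triangle_ineq[of c "y * d"] mult_right_mono[OF R, of "\<bar>d\<bar>"] by (simp add: abs_mult)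
  with q have "\<bar>q * (c + y * d)\<bar> \<le> B * \<bar>b\<bar> * (\<bar>c\<bar> + R * \<bar>d\<bar>)"
    unfolding abs_mult using bound_nonneg by (intro mult_mono) auto
  then show ?thesis
    unfolding split using abs_triangle_ineq[of "q * (c + y * d)" "h (a + x * b) * d"]
    by (simp add: algebra_simps)
qed

lemma has_real_derivative_integral_along_line:
  fixes a b c d :: "'b \<Rightarrow> real"
  assumes [measurable]: "a \<in> borel_measurable Q" "b \<in> borel_measurable Q"
      "c \<in> borel_measurable Q" "d \<in> borel_measurable Q"
    and bc: "integrable Q (\<lambda>z. \<bar>b z\<bar> * \<bar>c z\<bar>)" and bd: "integrable Q (\<lambda>z. \<bar>b z\<bar> * \<bar>d z\<bar>)"
    and line: "\<And>y. integrable Q (\<lambda>z. h (a z + y * b z) * (c z + y * d z))"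
    and hd: "integrable Q (\<lambda>z. h (a z + x * b z) * d z)"
  shows "((\<lambda>y. \<integral>z. h (a z + y * b z) * (c z + y * d z) \<partial>Q) has_real_derivative
          (\<integral>z. h' (a z + x * b z) * b z * (c z + x * d z) + h (a z + x * b z) * d z \<partial>Q)) (at x)"
proof -
  define q where "q y z = (h (a z + y * b z) * (c z + y * d z) - h (a z + x * b z) * (c z + x * d z)) / (y - x)"
    for y z
  define \<psi> where "\<psi> z = h' (a z + x * b z) * b z * (c z + x * d z) + h (a z + x * b z) * d z" for z
  have q_lim: "((\<lambda>y. q y z) \<longlongrightarrow> \<psi> z) (at x)" for z
    using has_real_derivative_along_line[of "a z" "b z" "c z" "d z" x]
    unfolding has_field_derivative_iff q_def \<psi>_def .
  show ?thesis
    unfolding has_field_derivative_iff tendsto_at_iff_sequentially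
  proof (intro allI impI)
    fix X :: "nat \<Rightarrow> real" assume X: "\<forall>i. X i \<in> UNIV - {x}" "X \<longlonglongrightarrow> x"
    obtain R where R: "\<forall>n. norm (X n) \<le> R"
      using BseqE[OF convergent_imp_Bseq[OF convergentI[OF X(2)]]] by blast
    define w where "w z = B * (\<bar>b z\<bar> * \<bar>c z\<bar>) + B * R * (\<bar>b z\<bar> * \<bar>d z\<bar>) + \<bar>h (a z + x * b z) * d z\<bar>" for z
    have "(\<lambda>i. \<integral>z. q (X i) z \<partial>Q) \<longlonglongrightarrow> (\<integral>z. \<psi> z \<partial>Q)"
    proof (rule integral_dominated_convergence[where w = w])
      show "integrable Q w" unfolding w_def using bc bd hd by auto
      show "AE z in Q. (\<lambda>i. q (X i) z) \<longlonglongrightarrow> \<psi> z"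
        using q_lim X unfolding tendsto_at_iff_sequentially by (auto simp: comp_def)
      show "AE z in Q. norm (q (X i) z) \<le> w z" for i
        using X(1) R difference_quotient_along_line_le unfolding q_def w_def real_norm_def by auto
    qed (auto simp: q_def \<psi>_def)
    moreover have "((\<integral>z. h (a z + X i * b z) * (c z + X i * d z) \<partial>Q)
        - (\<integral>z. h (a z + x * b z) * (c z + x * d z) \<partial>Q)) / (X i - x) = (\<integral>z. q (X i) z \<partial>Q)" for i
      unfolding q_def by (simp add: Bochner_Integration.integral_diff[OF line line])
    ultimately show "((\<lambda>y. ((\<integral>z. h (a z + y * b z) * (c z + y * d z) \<partial>Q)
        - (\<integral>z. h (a z + x * b z) * (c z + x * d z) \<partial>Q)) / (y - x)) \<circ> X)
      \<longlonglongrightarrow> (\<integral>z. h' (a z + x * b z) * b z * (c z + x * d z) + h (a z + x * b z) * d z \<partial>Q)"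
      by (simp add: comp_def \<psi>_def[abs_def])
  qed
qed

end

section \<open>Square integrable processes\<close>

locale filtered_horizon =
  fixes M :: "'a measure" and F :: "real \<Rightarrow> 'a measure" and T :: real
  assumes T_pos: "T > 0" and filtered: "filtered_prob_space M F T"
begin

abbreviation L :: "real measure" where "L \<equiv> restrict_space lborel {0..T}"

abbreviation LM :: "(real \<times> 'a) measure" where "LM \<equiv> L \<Otimes>\<^sub>M M"

lemma subalgebra_F: "t \<in> {0..T} \<Longrightarrow> subalgebra M (F t)"
  using filtered unfolding filtered_prob_space_def by auto

lemma emeasure_L_space: "emeasure L (space L) = ennreal T"
  using T_pos by (simp add: emeasure_restrict_space)

sublocale M: prob_space M
  using filtered unfolding filtered_prob_space_def by auto

sublocale L: finite_measure L
  using T_pos by (intro finite_measureI) (simp add: emeasure_restrict_space)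

sublocale LxM: pair_sigma_finite L M ..

sublocale LxL: pair_sigma_finite L L ..

lemma sigma_finite_subalgebra_F: "t \<in> {0..T} \<Longrightarrow> sigma_finite_subalgebra M (F t)"
proof -
  assume t: "t \<in> {0..T}"
  interpret finite_measure_subalgebra M "F t"
    using subalgebra_F[OF t] by unfold_locales auto
  show ?thesis by unfold_locales
qed

lemma finite_measure_LM: "finite_measure LM"
proof (rule finite_measureI)
  have "emeasure LM (space L \<times> space M) = emeasure L (space L) * emeasure M (space M)"
    by (rule M.emeasure_pair_measure_Times) (rule sets.top)+
  then show "emeasure LM (space LM) \<noteq> \<infinity>"
    by (simp add: space_pair_measure emeasure_L_space ennreal_mult_eq_top_iff)
qed

lemma ip_eq_integral_LM: "ip M T f g = (\<integral>z. f (fst z) (snd z) * g (fst z) (snd z) \<partial>LM)"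
  by (simp add: ip_def PM_def case_prod_beta')

lemma nrm_power2_eq_integral_LM: "(nrm M T f)\<^sup>2 = (\<integral>z. (f (fst z) (snd z))\<^sup>2 \<partial>LM)"
proof -
  have "ip M T f f = (\<integral>z. (f (fst z) (snd z))\<^sup>2 \<partial>LM)"
    by (simp add: ip_eq_integral_LM power2_eq_square)
  moreover have "0 \<le> (\<integral>z. (f (fst z) (snd z))\<^sup>2 \<partial>LM)" by simp
  ultimately show ?thesis by (simp add: nrm_def)
qed

lemma borel_measurable_L_id [measurable]: "(\<lambda>x. x) \<in> borel_measurable L"
  by (rule measurable_restrict_space1) simp

lemma borel_measurable_LM_fst [measurable]: "fst \<in> borel_measurable LM"
  by (rule measurable_compose[OF measurable_fst borel_measurable_L_id])

lemma measurable_section_L: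
  assumes "(\<lambda>z. u (fst z) (snd z)) \<in> borel_measurable LM" "\<omega> \<in> space M"
  shows "(\<lambda>s. u s \<omega>) \<in> borel_measurable L"
  using measurable_compose[OF measurable_Pair2'[of \<omega> M L] assms(1)] assms(2) by simp

lemma measurable_section_M:
  assumes "(\<lambda>z. u (fst z) (snd z)) \<in> borel_measurable LM" "t \<in> space L"
  shows "u t \<in> borel_measurable M"
  using measurable_compose[OF measurable_Pair1'[of t L M] assms(1)] assms(2) by simp

lemma AE_LM_of_AE_M:
  assumes "AE \<omega> in M. P \<omega>"
  shows "AE z in LM. P (snd z)"
proof -
  obtain N where N: "N \<in> null_sets M" "{\<omega>\<in>space M. \<not> P \<omega>} \<subseteq> N"
    using assms by (auto elim!: AE_E)
  then have "space L \<times> N \<in> null_sets LM" by blast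
  moreover have "{z\<in>space LM. \<not> P (snd z)} \<subseteq> space L \<times> N"
    using N by (auto simp: space_pair_measure)
  ultimately show ?thesis by (rule AE_I')
qed

lemma progressive_measurable_F:
  assumes "progressive F T u" "t \<in> {0..T}"
  shows "u t \<in> borel_measurable (F t)"
proof -
  have u: "(\<lambda>(s, \<omega>). u s \<omega>) \<in> borel_measurable (restrict_space lborel {0..t} \<Otimes>\<^sub>M F t)"
    using assms unfolding progressive_def by auto
  have "(\<lambda>\<omega>. (t, \<omega>)) \<in> measurable (F t) (restrict_space lborel {0..t} \<Otimes>\<^sub>M F t)"
    using assms(2) by (intro measurable_Pair) (auto simp: space_restrict_space)
  from measurable_compose[OF this u] show ?thesis by simp
qed

lemma progressive_measurable_LM:
  assumes "progressive F T u"
  shows "(\<lambda>z. u (fst z) (snd z)) \<in> borel_measurable LM"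
proof -
  have u: "(\<lambda>(s, \<omega>). u s \<omega>) \<in> borel_measurable (L \<Otimes>\<^sub>M F T)"
    using assms T_pos unfolding progressive_def by auto
  have "(\<lambda>x. x) \<in> measurable M (F T)"
    using subalgebra_F[of T] T_pos unfolding subalgebra_def by (intro measurableI) auto
  then have "(\<lambda>z. (fst z, snd z)) \<in> measurable LM (L \<Otimes>\<^sub>M F T)"
    using measurable_compose[OF measurable_snd] by (intro measurable_Pair) auto
  from measurable_compose[OF this u] show ?thesis by (simp add: case_prod_beta)
qed

lemma progressive_lincomb:
  assumes "progressive F T u" "progressive F T v"
  shows "progressive F T (\<lambda>t \<omega>. a * u t \<omega> + b * v t \<omega>)"
  unfolding progressive_def
proof
  fix t assume "t \<in> {0..T}"
  then have [measurable]:
      "(\<lambda>z. u (fst z) (snd z)) \<in> borel_measurable (restrict_space lborel {0..t} \<Otimes>\<^sub>M F t)"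
      "(\<lambda>z. v (fst z) (snd z)) \<in> borel_measurable (restrict_space lborel {0..t} \<Otimes>\<^sub>M F t)"
    using assms unfolding progressive_def by (auto simp: case_prod_beta')
  show "(\<lambda>(s, \<omega>). a * u s \<omega> + b * v s \<omega>) \<in> borel_measurable (restrict_space lborel {0..t} \<Otimes>\<^sub>M F t)"
    unfolding case_prod_beta' by measurable
qed

definition sq_integrable :: "(real \<times> 'a \<Rightarrow> real) \<Rightarrow> bool" where
  "sq_integrable f \<longleftrightarrow> f \<in> borel_measurable LM \<and> integrable LM (\<lambda>z. (f z)\<^sup>2)"

lemma sq_integrable_lincomb:
  assumes "sq_integrable f" "sq_integrable g"
  shows "sq_integrable (\<lambda>z. a * f z + b * g z)"
proof -
  have [measurable]: "f \<in> borel_measurable LM" "g \<in> borel_measurable LM"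
    and bound: "integrable LM (\<lambda>z. 2 * a\<^sup>2 * (f z)\<^sup>2 + 2 * b\<^sup>2 * (g z)\<^sup>2)"
    using assms by (auto simp: sq_integrable_def)
  from bound have "integrable LM (\<lambda>z. (a * f z + b * g z)\<^sup>2)"
  proof (rule Bochner_Integration.integrable_bound)
    show "AE z in LM. norm ((a * f z + b * g z)\<^sup>2) \<le> norm (2 * a\<^sup>2 * (f z)\<^sup>2 + 2 * b\<^sup>2 * (g z)\<^sup>2)"
      using power2_lincomb_le by simp
  qed measurable
  then show ?thesis by (simp add: sq_integrable_def)
qed

lemma sq_integrable_const: "sq_integrable (\<lambda>z. c)"
proof -
  interpret finite_measure LM by (rule finite_measure_LM)
  show ?thesis by (simp add: sq_integrable_def)
qed

lemma sq_integrable_dominated: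
  assumes "sq_integrable f" "g \<in> borel_measurable LM" "\<And>z. \<bar>g z\<bar> \<le> c * \<bar>f z\<bar>"
  shows "sq_integrable g"
proof -
  have [measurable]: "g \<in> borel_measurable LM" by fact
  have bound: "integrable LM (\<lambda>z. c\<^sup>2 * (f z)\<^sup>2)" using assms(1) by (simp add: sq_integrable_def)
  have pointwise: "(g z)\<^sup>2 \<le> c\<^sup>2 * (f z)\<^sup>2" for z
  proof -
    have "\<bar>g z\<bar>\<^sup>2 \<le> (c * \<bar>f z\<bar>)\<^sup>2" using assms(3)[of z] by (intro power_mono) auto
    then show ?thesis by (simp add: power_mult_distrib)
  qed
  have "integrable LM (\<lambda>z. (g z)\<^sup>2)"
  proof (rule Bochner_Integration.integrable_bound[OF bound])
    show "AE z in LM. norm ((g z)\<^sup>2) \<le> norm (c\<^sup>2 * (f z)\<^sup>2)" using pointwise by simp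
  qed measurable
  then show ?thesis by (simp add: sq_integrable_def)
qed

lemma integrable_mult_sq_integrable:
  "sq_integrable f \<Longrightarrow> sq_integrable g \<Longrightarrow> integrable LM (\<lambda>z. f z * g z)"
  unfolding sq_integrable_def by (intro integrable_mult_of_square_integrable) auto

lemma integrable_abs_mult_sq_integrable:
  "sq_integrable f \<Longrightarrow> sq_integrable g \<Longrightarrow> integrable LM (\<lambda>z. \<bar>f z\<bar> * \<bar>g z\<bar>)"
  using integrable_abs[OF integrable_mult_sq_integrable[of f g]] by (simp add: abs_mult)

lemma L2_iff_sq_integrable:
  "u \<in> L2 M F T \<longleftrightarrow> progressive F T u \<and> sq_integrable (\<lambda>z. u (fst z) (snd z))"
  using progressive_measurable_LM
  by (auto simp: L2_def PM_def sq_integrable_def case_prod_beta')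

lemma L2_progressive: "u \<in> L2 M F T \<Longrightarrow> progressive F T u"
  and sq_integrable_L2: "u \<in> L2 M F T \<Longrightarrow> sq_integrable (\<lambda>z. u (fst z) (snd z))"
  and L2_measurable: "u \<in> L2 M F T \<Longrightarrow> (\<lambda>z. u (fst z) (snd z)) \<in> borel_measurable LM"
  by (auto simp: L2_iff_sq_integrable sq_integrable_def)

lemma L2_lincomb:
  "u \<in> L2 M F T \<Longrightarrow> v \<in> L2 M F T \<Longrightarrow> (\<lambda>t \<omega>. a * u t \<omega> + b * v t \<omega>) \<in> L2 M F T"
  by (simp add: L2_iff_sq_integrable progressive_lincomb sq_integrable_lincomb)

lemma L2_pdiff: "u \<in> L2 M F T \<Longrightarrow> v \<in> L2 M F T \<Longrightarrow> pdiff u v \<in> L2 M F T"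
  using L2_lincomb[of u v 1 "-1"] by (simp add: pdiff_def)

lemma L2_pconv: "u \<in> L2 M F T \<Longrightarrow> v \<in> L2 M F T \<Longrightarrow> pconv y u v \<in> L2 M F T"
  using L2_lincomb[of u v y "1 - y"] by (simp add: pconv_def padd_def pscale_def)

lemma AE_integrable_path:
  assumes "u \<in> L2 M F T"
  shows "AE \<omega> in M. integrable L (\<lambda>s. (u s \<omega>)\<^sup>2) \<and> integrable L (\<lambda>s. u s \<omega>)"
proof -
  have "AE \<omega> in M. integrable L (\<lambda>s. (u s \<omega>)\<^sup>2)"
    using LxM.AE_integrable_snd[of "\<lambda>s \<omega>. (u s \<omega>)\<^sup>2"] sq_integrable_L2[OF assms]
    by (simp add: sq_integrable_def case_prod_beta')
  with AE_space show ?thesis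
  proof eventually_elim
    case (elim \<omega>)
    have "(\<lambda>s. u s \<omega>) \<in> borel_measurable L"
      using measurable_section_L[OF L2_measurable[OF assms]] elim(1) .
    from L.square_integrable_imp_integrable[OF this elim(2)] elim(2) show ?case by simp
  qed
qed

section \<open>Volterra operators\<close>

definition square_bounded_kernel :: "(real \<Rightarrow> real \<Rightarrow> real) \<Rightarrow> real \<Rightarrow> bool" where
  "square_bounded_kernel K C \<longleftrightarrow> (\<lambda>(t, s). K t s) \<in> borel_measurable (lborel \<Otimes>\<^sub>M lborel) \<and>
     (\<forall>t\<in>{0..T}. (\<integral>\<^sup>+ s. ennreal ((K t s)\<^sup>2) * indicator {0..t} s \<partial>lborel) \<le> ennreal C)"

lemma kernel_measurable_LL:
  assumes "square_bounded_kernel K C"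
  shows "(\<lambda>(t, s). K t s) \<in> borel_measurable (L \<Otimes>\<^sub>M L)"
proof -
  have "(\<lambda>z. (fst z, snd z)) \<in> measurable (L \<Otimes>\<^sub>M L) (lborel \<Otimes>\<^sub>M lborel)"
    by (intro measurable_Pair) simp_all
  moreover have "(\<lambda>(t, s). K t s) \<in> borel_measurable (lborel \<Otimes>\<^sub>M lborel)"
    using assms unfolding square_bounded_kernel_def by blast
  ultimately show ?thesis
    using measurable_compose[of "\<lambda>z. (fst z, snd z)"] by (simp add: case_prod_beta)
qed

lemma kernel_row_measurable: "square_bounded_kernel K C \<Longrightarrow> K t \<in> borel_measurable L"
  and kernel_column_measurable: "square_bounded_kernel K C \<Longrightarrow> (\<lambda>s. K s t) \<in> borel_measurable L"
  unfolding square_bounded_kernel_def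
  by (auto intro!: measurable_restrict_space1 simp: case_prod_beta
      dest: measurable_compose[OF measurable_Pair1'[of t lborel lborel]]
            measurable_compose[OF measurable_Pair2'[of t lborel lborel]])

lemma kernel_row_nn_integral_le:
  assumes "square_bounded_kernel K C" "t \<in> {0..T}"
  shows "(\<integral>\<^sup>+ s. ennreal ((K t s)\<^sup>2) * indicator {0..t} s \<partial>L) \<le> ennreal C"
proof -
  have "(\<integral>\<^sup>+ s. ennreal ((K t s)\<^sup>2) * indicator {0..t} s \<partial>L)
      = (\<integral>\<^sup>+ s. ennreal ((K t s)\<^sup>2) * indicator {0..t} s * indicator {0..T} s \<partial>lborel)"
    by (rule nn_integral_restrict_space) simp
  also have "\<dots> = (\<integral>\<^sup>+ s. ennreal ((K t s)\<^sup>2) * indicator {0..t} s \<partial>lborel)"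
    using assms(2) by (intro nn_integral_cong) (auto split: split_indicator)
  also have "\<dots> \<le> ennreal C" using assms unfolding square_bounded_kernel_def by auto
  finally show ?thesis .
qed

lemma volt_eq_integral_L:
  assumes "t \<in> {0..T}"
  shows "volt K u t \<omega> = (\<integral>s. indicator {0..t} s * K t s * u s \<omega> \<partial>L)"
proof -
  have "(\<integral>s. indicator {0..t} s * K t s * u s \<omega> \<partial>L)
      = (\<integral>s. indicator {0..T} s *\<^sub>R (indicator {0..t} s * K t s * u s \<omega>) \<partial>lborel)"
    by (rule integral_restrict_space) simp
  also have "\<dots> = (\<integral>s. indicator {0..t} s *\<^sub>R (K t s * u s \<omega>) \<partial>lborel)"
    using assms by (intro Bochner_Integration.integral_cong) (auto split: split_indicator)
  finally show ?thesis by (simp add: volt_def set_lebesgue_integral_def)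
qed

lemma volt_measurable:
  assumes K: "square_bounded_kernel K C"
    and u: "(\<lambda>z. u (fst z) (snd z)) \<in> borel_measurable LM"
  shows "(\<lambda>z. volt K u (fst z) (snd z)) \<in> borel_measurable LM"
proof -
  have [measurable]: "(\<lambda>(t, s). K t s) \<in> borel_measurable (L \<Otimes>\<^sub>M L)"
    using kernel_measurable_LL[OF K] .
  have [measurable]: "(\<lambda>(s, \<omega>). u s \<omega>) \<in> borel_measurable LM"
    using u by (simp add: case_prod_beta')
  have [measurable]: "(\<lambda>p. fst (fst p)) \<in> borel_measurable (LM \<Otimes>\<^sub>M L)"
    and [measurable]: "snd \<in> borel_measurable (LM \<Otimes>\<^sub>M L)"
    by (rule measurable_compose[OF measurable_fst borel_measurable_LM_fst]
        measurable_compose[OF measurable_snd borel_measurable_L_id])+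
  have "(\<lambda>p. (if 0 \<le> snd p \<and> snd p \<le> fst (fst p) then 1 else 0) * K (fst (fst p)) (snd p)
        * u (snd p) (snd (fst p))) \<in> borel_measurable (LM \<Otimes>\<^sub>M L)"
    by measurable
  then have "(\<lambda>z. \<integral>s. indicator {0..fst z} s * K (fst z) s * u s (snd z) \<partial>L) \<in> borel_measurable LM"
    by (intro L.borel_measurable_lebesgue_integral)
       (simp add: case_prod_beta indicator_def of_bool_def)
  then show ?thesis
    by (rule measurable_cong[THEN iffD1, rotated]) (auto simp: space_pair_measure volt_eq_integral_L)
qed

lemma volt_square_le:
  assumes K: "square_bounded_kernel K C" and u: "(\<lambda>s. u s \<omega>) \<in> borel_measurable L"
    and t: "t \<in> {0..T}"
  shows "ennreal ((volt K u t \<omega>)\<^sup>2) \<le> ennreal C * (\<integral>\<^sup>+ s. ennreal ((u s \<omega>)\<^sup>2) \<partial>L)"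
proof -
  have [measurable]: "K t \<in> borel_measurable L" by (rule kernel_row_measurable[OF K])
  have "ennreal ((volt K u t \<omega>)\<^sup>2)
      \<le> (\<integral>\<^sup>+ s. ennreal ((indicator {0..t} s * K t s)\<^sup>2) \<partial>L) * (\<integral>\<^sup>+ s. ennreal ((u s \<omega>)\<^sup>2) \<partial>L)"
    unfolding volt_eq_integral_L[OF t] mult.assoc[symmetric]
    by (rule square_integral_mult_le_nn_integral) (use u in measurable)
  also have "(\<integral>\<^sup>+ s. ennreal ((indicator {0..t} s * K t s)\<^sup>2) \<partial>L)
      = (\<integral>\<^sup>+ s. ennreal ((K t s)\<^sup>2) * indicator {0..t} s \<partial>L)"
    by (intro nn_integral_cong) (auto split: split_indicator)
  finally show ?thesis
    using kernel_row_nn_integral_le[OF K t] order_trans mult_right_mono by fastforce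
qed

lemma nn_integral_path_square:
  assumes "(\<lambda>z. k (fst z) (snd z)) \<in> borel_measurable LM"
  shows "(\<integral>\<^sup>+ \<omega>. (\<integral>\<^sup>+ s. ennreal ((k s \<omega>)\<^sup>2) \<partial>L) \<partial>M)
    = (\<integral>\<^sup>+ z. ennreal ((k (fst z) (snd z))\<^sup>2) \<partial>LM)"
  using assms by (subst LxM.nn_integral_snd[symmetric]) (auto simp: case_prod_beta)

lemma nn_integral_path_square_finite:
  assumes "sq_integrable (\<lambda>z. k (fst z) (snd z))"
  shows "(\<integral>\<^sup>+ \<omega>. (\<integral>\<^sup>+ s. ennreal ((k s \<omega>)\<^sup>2) \<partial>L) \<partial>M) < \<infinity>"
  using assms unfolding sq_integrable_def integrable_iff_bounded
  by (simp add: nn_integral_path_square)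

lemma borel_measurable_nn_integral_path_square:
  assumes "(\<lambda>z. k (fst z) (snd z)) \<in> borel_measurable LM"
  shows "(\<lambda>\<omega>. \<integral>\<^sup>+ s. ennreal ((k s \<omega>)\<^sup>2) \<partial>L) \<in> borel_measurable M"
proof (rule L.borel_measurable_nn_integral)
  have [measurable]: "(\<lambda>(s, \<omega>). k s \<omega>) \<in> borel_measurable LM"
    using assms by (simp add: case_prod_beta')
  show "(\<lambda>(\<omega>, s). ennreal ((k s \<omega>)\<^sup>2)) \<in> borel_measurable (M \<Otimes>\<^sub>M L)" by measurable
qed

lemma sq_integrable_of_path_bound:
  assumes f: "f \<in> borel_measurable LM"
    and a: "a \<in> borel_measurable L" "(\<integral>\<^sup>+ t. a t \<partial>L) < \<infinity>"
    and k: "sq_integrable (\<lambda>z. k (fst z) (snd z))"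
    and bound: "\<And>t \<omega>. t \<in> space L \<Longrightarrow> \<omega> \<in> space M \<Longrightarrow>
      ennreal ((f (t, \<omega>))\<^sup>2) \<le> a t * (\<integral>\<^sup>+ s. ennreal ((k s \<omega>)\<^sup>2) \<partial>L)"
  shows "sq_integrable f"
proof -
  define H where "H \<omega> = (\<integral>\<^sup>+ s. ennreal ((k s \<omega>)\<^sup>2) \<partial>L)" for \<omega>
  have H: "H \<in> borel_measurable M"
    unfolding H_def using k by (intro borel_measurable_nn_integral_path_square) (simp add: sq_integrable_def)
  have "(\<integral>\<^sup>+ z. ennreal (norm ((f z)\<^sup>2)) \<partial>LM) \<le> (\<integral>\<^sup>+ z. a (fst z) * H (snd z) \<partial>LM)"
    using bound by (intro nn_integral_mono) (auto simp: space_pair_measure H_def)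
  also have "\<dots> = (\<integral>\<^sup>+ t. \<integral>\<^sup>+ \<omega>. a t * H \<omega> \<partial>M \<partial>L)"
    using a H by (subst M.nn_integral_fst[symmetric]) (auto simp: case_prod_beta)
  also have "\<dots> = (\<integral>\<^sup>+ t. a t * (\<integral>\<^sup>+ \<omega>. H \<omega> \<partial>M) \<partial>L)"
    using H by (intro nn_integral_cong nn_integral_cmult) auto
  also have "\<dots> = (\<integral>\<^sup>+ t. a t \<partial>L) * (\<integral>\<^sup>+ \<omega>. H \<omega> \<partial>M)"
    using a by (intro nn_integral_multc) auto
  also have "\<dots> < \<infinity>"
    using a nn_integral_path_square_finite[OF k] by (simp add: H_def ennreal_mult_less_top)
  finally show ?thesis
    using f by (simp add: sq_integrable_def integrable_iff_bounded)
qed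

lemma sq_integrable_volt:
  assumes K: "square_bounded_kernel K C" and u: "u \<in> L2 M F T"
  shows "sq_integrable (\<lambda>z. volt K u (fst z) (snd z))"
proof (rule sq_integrable_of_path_bound[where a = "\<lambda>_. ennreal C"])
  show "(\<lambda>z. volt K u (fst z) (snd z)) \<in> borel_measurable LM"
    using volt_measurable[OF K L2_measurable[OF u]] .
  show "(\<integral>\<^sup>+ t. ennreal C \<partial>L) < \<infinity>"
    using emeasure_L_space by (simp add: ennreal_mult_less_top)
  show "ennreal ((volt K u (fst (t, \<omega>)) (snd (t, \<omega>)))\<^sup>2) \<le> ennreal C * (\<integral>\<^sup>+ s. ennreal ((u s \<omega>)\<^sup>2) \<partial>L)"
    if "t \<in> space L" "\<omega> \<in> space M" for t \<omega>
    using volt_square_le[OF K measurable_section_L[OF L2_measurable[OF u]]] that by simp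
qed (use sq_integrable_L2[OF u] in auto)

lemma integrable_kernel_row_mult:
  assumes K: "square_bounded_kernel K C" and t: "t \<in> {0..T}"
    and u: "(\<lambda>s. u s) \<in> borel_measurable L" "integrable L (\<lambda>s. (u s)\<^sup>2)"
  shows "integrable L (\<lambda>s. indicator {0..t} s * K t s * u s)"
proof -
  have [measurable]: "K t \<in> borel_measurable L" by (rule kernel_row_measurable[OF K])
  have "(\<integral>\<^sup>+ s. ennreal (norm ((indicator {0..t} s * K t s)\<^sup>2)) \<partial>L)
      = (\<integral>\<^sup>+ s. ennreal ((K t s)\<^sup>2) * indicator {0..t} s \<partial>L)"
    by (intro nn_integral_cong) (auto split: split_indicator)
  also have "\<dots> < \<infinity>"
    using kernel_row_nn_integral_le[OF K t] by (simp add: le_less_trans)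
  finally have "integrable L (\<lambda>s. (indicator {0..t} s * K t s)\<^sup>2)"
    by (simp add: integrable_iff_bounded)
  from integrable_mult_of_square_integrable[OF _ u(1) this u(2)] show ?thesis
    by simp
qed

lemma volt_lincomb:
  assumes K: "square_bounded_kernel K C" and t: "t \<in> {0..T}"
    and u: "(\<lambda>s. u s \<omega>) \<in> borel_measurable L" "integrable L (\<lambda>s. (u s \<omega>)\<^sup>2)"
    and v: "(\<lambda>s. v s \<omega>) \<in> borel_measurable L" "integrable L (\<lambda>s. (v s \<omega>)\<^sup>2)"
  shows "volt K (\<lambda>t \<omega>. a * u t \<omega> + b * v t \<omega>) t \<omega> = a * volt K u t \<omega> + b * volt K v t \<omega>"
  using integrable_kernel_row_mult[OF K t u] integrable_kernel_row_mult[OF K t v]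
  by (simp add: volt_eq_integral_L[OF t] algebra_simps)

section \<open>Positivity of the operator H\<close>

lemma AE_L_neq: "AE s in L. s \<noteq> t"
proof -
  have "AE s in lborel. s \<noteq> t"
    by (rule AE_I'[of "{t}"]) auto
  then show ?thesis by (subst AE_restrict_space_iff) (auto elim: AE_mp)
qed

lemma integral_L_indicator_atLeast:
  assumes t: "t \<in> {0..T}"
  shows "(\<integral>r. indicator {t..} r \<partial>L) = T - t"
proof -
  have "(\<integral>r. indicator {t..} r \<partial>L) = measure L ({t..} \<inter> space L)"
    by (rule Bochner_Integration.integral_indicator)
  also have "{t..} \<inter> space L = {t..T}" using t by auto
  also have "measure L {t..T} = measure lborel {t..T}"
    using t by (intro measure_restrict_space) auto
  finally show ?thesis using t by simp
qed

lemma integrable_LL_mult_bounded: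
  fixes g :: "real \<Rightarrow> real"
  assumes g: "integrable L g"
    and c: "(\<lambda>(t, s). c t s) \<in> borel_measurable (L \<Otimes>\<^sub>M L)" and c_le: "\<And>t s. \<bar>c t s\<bar> \<le> 1"
  shows "integrable (L \<Otimes>\<^sub>M L) (\<lambda>(t, s). g t * g s * c t s)"
  unfolding integrable_iff_bounded
proof
  have [measurable]: "g \<in> borel_measurable L" using g by auto
  note c[measurable]
  show "(\<lambda>(t, s). g t * g s * c t s) \<in> borel_measurable (L \<Otimes>\<^sub>M L)" by measurable
  have "(\<integral>\<^sup>+ z. ennreal (norm ((\<lambda>(t, s). g t * g s * c t s) z)) \<partial>(L \<Otimes>\<^sub>M L))
     \<le> (\<integral>\<^sup>+ z. ennreal \<bar>g (fst z)\<bar> * ennreal \<bar>g (snd z)\<bar> \<partial>(L \<Otimes>\<^sub>M L))"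
  proof (intro nn_integral_mono)
    fix z :: "real \<times> real"
    have "\<bar>g (fst z)\<bar> * \<bar>g (snd z)\<bar> * \<bar>c (fst z) (snd z)\<bar> \<le> \<bar>g (fst z)\<bar> * \<bar>g (snd z)\<bar> * 1"
      using c_le by (intro mult_left_mono) auto
    then show "ennreal (norm ((\<lambda>(t, s). g t * g s * c t s) z)) \<le> ennreal \<bar>g (fst z)\<bar> * ennreal \<bar>g (snd z)\<bar>"
      by (cases z) (simp add: abs_mult ennreal_mult[symmetric] ennreal_leI)
  qed
  also have "\<dots> = (\<integral>\<^sup>+ t. \<integral>\<^sup>+ s. ennreal \<bar>g t\<bar> * ennreal \<bar>g s\<bar> \<partial>L \<partial>L)"
    by (subst L.nn_integral_fst[symmetric]) auto
  also have "\<dots> = (\<integral>\<^sup>+ t. ennreal \<bar>g t\<bar> * (\<integral>\<^sup>+ s. ennreal \<bar>g s\<bar> \<partial>L) \<partial>L)"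
    by (intro nn_integral_cong nn_integral_cmult) auto
  also have "\<dots> = (\<integral>\<^sup>+ t. ennreal \<bar>g t\<bar> \<partial>L) * (\<integral>\<^sup>+ s. ennreal \<bar>g s\<bar> \<partial>L)"
    by (rule nn_integral_multc) auto
  also have "\<dots> < \<infinity>"
    using g unfolding integrable_iff_bounded by (simp add: ennreal_mult_less_top)
  finally show "(\<integral>\<^sup>+ z. ennreal (norm ((\<lambda>(t, s). g t * g s * c t s) z)) \<partial>(L \<Otimes>\<^sub>M L)) < \<infinity>" .
qed

lemma integrable_LL_fst:
  fixes f :: "real \<Rightarrow> real"
  assumes "integrable L f"
  shows "integrable (L \<Otimes>\<^sub>M L) (\<lambda>(t, r). f t)"
  unfolding integrable_iff_bounded
proof
  have [measurable]: "f \<in> borel_measurable L" using assms by auto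
  show "(\<lambda>(t, r). f t) \<in> borel_measurable (L \<Otimes>\<^sub>M L)" by measurable
  have "(\<integral>\<^sup>+ z. ennreal (norm ((\<lambda>(t, r). f t) z)) \<partial>(L \<Otimes>\<^sub>M L)) = (\<integral>\<^sup>+ t. \<integral>\<^sup>+ r. ennreal (norm (f t)) \<partial>L \<partial>L)"
    by (subst L.nn_integral_fst[symmetric]) (auto simp: case_prod_beta)
  also have "\<dots> = (\<integral>\<^sup>+ t. ennreal (norm (f t)) \<partial>L) * ennreal T"
    using emeasure_L_space by (simp add: nn_integral_multc)
  also have "\<dots> < \<infinity>" using assms unfolding integrable_iff_bounded by (simp add: ennreal_mult_less_top)
  finally show "(\<integral>\<^sup>+ z. ennreal (norm ((\<lambda>(t, r). f t) z)) \<partial>(L \<Otimes>\<^sub>M L)) < \<infinity>" .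
qed

definition running_integral :: "(real \<Rightarrow> real) \<Rightarrow> real \<Rightarrow> real" where
  "running_integral f t = (\<integral>s. indicator {..<t} s * f s \<partial>L)"

lemma running_integral_measurable [measurable]:
  assumes [measurable]: "f \<in> borel_measurable L"
  shows "running_integral f \<in> borel_measurable L"
proof -
  have "(\<lambda>(t, s). indicator {..<t} s * f s) = (\<lambda>z. (if snd z < fst z then 1 else 0) * f (snd z))"
    by (auto simp: fun_eq_iff split: split_indicator)
  moreover have "(\<lambda>z. (if snd z < fst z then 1 else 0) * f (snd z)) \<in> borel_measurable (L \<Otimes>\<^sub>M L)"
    by measurable
  ultimately show ?thesis unfolding running_integral_def
    by (intro L.borel_measurable_lebesgue_integral) simp
qed

lemma abs_running_integral_le:
  assumes "integrable L f"
  shows "\<bar>running_integral f t\<bar> \<le> (\<integral>s. \<bar>f s\<bar> \<partial>L)"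
proof -
  have "\<bar>running_integral f t\<bar> \<le> (\<integral>s. \<bar>indicator {..<t} s * f s\<bar> \<partial>L)"
    unfolding running_integral_def by (rule integral_abs_bound)
  also have "\<dots> \<le> (\<integral>s. \<bar>f s\<bar> \<partial>L)"
  proof (intro integral_mono)
    have [measurable]: "f \<in> borel_measurable L" using assms by auto
    show "integrable L (\<lambda>s. \<bar>indicator {..<t} s * f s\<bar>)"
      by (rule Bochner_Integration.integrable_bound[OF integrable_abs[OF assms]])
         (auto split: split_indicator)
  qed (use assms in \<open>auto split: split_indicator\<close>)
  finally show ?thesis .
qed

lemma integrable_LL_triangles:
  fixes g :: "real \<Rightarrow> real"
  assumes g: "integrable L g"
  shows "integrable (L \<Otimes>\<^sub>M L) (\<lambda>(t, s). g t * (indicator {..<t} s * g s))"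
    and "integrable (L \<Otimes>\<^sub>M L) (\<lambda>(t, s). g t * (indicator {t..} s * g s))"
proof -
  have lt: "(\<lambda>(t, s). indicator {..<t} s :: real) = (\<lambda>z. if snd z < fst z then 1 else 0)"
    and ge: "(\<lambda>(t, s). indicator {t..} s :: real) = (\<lambda>z. if fst z \<le> snd z then 1 else 0)"
    by (auto simp: fun_eq_iff split: split_indicator)
  have "(\<lambda>(t, s). indicator {..<t} s :: real) \<in> borel_measurable (L \<Otimes>\<^sub>M L)"
    unfolding lt by measurable
  moreover have "(\<lambda>(t, s). indicator {t..} s :: real) \<in> borel_measurable (L \<Otimes>\<^sub>M L)"
    unfolding ge by measurable
  ultimately have "integrable (L \<Otimes>\<^sub>M L) (\<lambda>(t, s). g t * g s * indicator {..<t} s)"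
    and "integrable (L \<Otimes>\<^sub>M L) (\<lambda>(t, s). g t * g s * indicator {t..} s)"
    by (auto intro!: integrable_LL_mult_bounded[OF g] split: split_indicator)
  then show "integrable (L \<Otimes>\<^sub>M L) (\<lambda>(t, s). g t * (indicator {..<t} s * g s))"
    and "integrable (L \<Otimes>\<^sub>M L) (\<lambda>(t, s). g t * (indicator {t..} s * g s))"
    by (simp_all add: mult_ac)
qed

lemma integral_upper_triangle_eq_lower:
  fixes g :: "real \<Rightarrow> real"
  assumes g: "integrable L g"
  shows "(\<integral>t. \<integral>s. g t * (indicator {t..} s * g s) \<partial>L \<partial>L) = (\<integral>t. g t * running_integral g t \<partial>L)"
proof -
  have [measurable]: "g \<in> borel_measurable L" using g by auto
  have "(\<integral>t. \<integral>s. g t * (indicator {t..} s * g s) \<partial>L \<partial>L) = (\<integral>s. \<integral>t. g t * (indicator {t..} s * g s) \<partial>L \<partial>L)"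
    using LxL.Fubini_integral[OF integrable_LL_triangles(2)[OF g]] by simp
  also have "\<dots> = (\<integral>s. \<integral>t. g s * (indicator {..<s} t * g t) \<partial>L \<partial>L)"
  proof (rule Bochner_Integration.integral_cong[OF refl])
    fix s
    have "(\<lambda>t. g t * (indicator {t..} s * g s)) = (\<lambda>t. g t * ((if t \<le> s then 1 else 0) * g s))"
      and "(\<lambda>t. g s * (indicator {..<s} t * g t)) = (\<lambda>t. g s * ((if t < s then 1 else 0) * g t))"
      by (auto simp: fun_eq_iff split: split_indicator)
    moreover have "AE t in L. g t * (indicator {t..} s * g s) = g s * (indicator {..<s} t * g t)"
      using AE_L_neq[of s] by eventually_elim (auto split: split_indicator)
    ultimately show "(\<integral>t. g t * (indicator {t..} s * g s) \<partial>L) = (\<integral>t. g s * (indicator {..<s} t * g t) \<partial>L)"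
      by (intro integral_cong_AE) simp_all
  qed
  finally show ?thesis by (simp add: running_integral_def)
qed

lemma integral_mult_running_integral:
  fixes g :: "real \<Rightarrow> real"
  assumes g: "integrable L g"
  shows "(\<integral>t. g t * running_integral g t \<partial>L) = (\<integral>t. g t \<partial>L)\<^sup>2 / 2"
proof -
  have [measurable]: "g \<in> borel_measurable L" using g by auto
  have split: "g t * (\<integral>s. g s \<partial>L)
      = (\<integral>s. g t * (indicator {..<t} s * g s) \<partial>L) + (\<integral>s. g t * (indicator {t..} s * g s) \<partial>L)" for t
  proof -
    have ind_int: "integrable L (\<lambda>s. indicator A s * g s)" if "A \<in> sets borel" for A :: "real set"
      using that by (intro Bochner_Integration.integrable_bound[OF g]) (auto split: split_indicator)
    have "(\<integral>s. g s \<partial>L) = (\<integral>s. indicator {..<t} s * g s + indicator {t..} s * g s \<partial>L)"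
      by (intro Bochner_Integration.integral_cong) (auto split: split_indicator)
    also have "\<dots> = (\<integral>s. indicator {..<t} s * g s \<partial>L) + (\<integral>s. indicator {t..} s * g s \<partial>L)"
      by (intro Bochner_Integration.integral_add ind_int) auto
    finally show ?thesis by (simp add: distrib_left)
  qed
  have "(\<integral>t. g t \<partial>L)\<^sup>2 = (\<integral>t. g t * (\<integral>s. g s \<partial>L) \<partial>L)"
    by (simp add: power2_eq_square)
  also have "\<dots> = (\<integral>t. \<integral>s. g t * (indicator {..<t} s * g s) \<partial>L \<partial>L)
      + (\<integral>t. \<integral>s. g t * (indicator {t..} s * g s) \<partial>L \<partial>L)"
    unfolding split using LxL.integrable_fst[OF integrable_LL_triangles(1)[OF g]]
      LxL.integrable_fst[OF integrable_LL_triangles(2)[OF g]]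
    by (simp add: case_prod_beta)
  also have "\<dots> = 2 * (\<integral>t. g t * running_integral g t \<partial>L)"
    unfolding integral_upper_triangle_eq_lower[OF g] by (simp add: running_integral_def)
  finally show ?thesis by simp
qed

lemma integral_upto_mult_running_integral:
  fixes f :: "real \<Rightarrow> real"
  assumes f: "integrable L f"
  shows "(\<integral>t. indicator {..r} t * f t * running_integral f t \<partial>L)
    = (\<integral>s. indicator {..r} s * f s \<partial>L)\<^sup>2 / 2"
proof -
  have [measurable]: "f \<in> borel_measurable L" using f by auto
  define g where "g s = indicator {..r} s * f s" for s
  have g: "integrable L g"
    unfolding g_def by (rule Bochner_Integration.integrable_bound[OF f]) (auto split: split_indicator)
  have "g t * running_integral g t = indicator {..r} t * f t * running_integral f t" for t
  proof (cases "t \<le> r")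
    case True
    then have "running_integral g t = running_integral f t"
      unfolding running_integral_def g_def
      by (intro Bochner_Integration.integral_cong) (auto split: split_indicator)
    then show ?thesis by (simp add: g_def)
  qed (simp add: g_def)
  then have "(\<integral>t. indicator {..r} t * f t * running_integral f t \<partial>L) = (\<integral>t. g t * running_integral g t \<partial>L)"
    by simp
  then show ?thesis
    unfolding integral_mult_running_integral[OF g] by (simp add: g_def[abs_def])
qed

lemma integral_remaining_time_mult_running_integral_nonneg:
  fixes f :: "real \<Rightarrow> real"
  assumes f: "integrable L f" and fY: "integrable L (\<lambda>t. f t * running_integral f t)"
  shows "0 \<le> (\<integral>t. (T - t) * (f t * running_integral f t) \<partial>L)"
proof -
  have [measurable]: "f \<in> borel_measurable L" using f by auto
  have "(\<lambda>(t, r). indicator {t..} r * (f t * running_integral f t))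
      = (\<lambda>z. (if fst z \<le> snd z then 1 else 0) * (f (fst z) * running_integral f (fst z)))"
    by (auto simp: fun_eq_iff split: split_indicator)
  then have "(\<lambda>(t, r). indicator {t..} r * (f t * running_integral f t)) \<in> borel_measurable (L \<Otimes>\<^sub>M L)"
    by simp
  then have int: "integrable (L \<Otimes>\<^sub>M L) (\<lambda>(t, r). indicator {t..} r * (f t * running_integral f t))"
    by (rule Bochner_Integration.integrable_bound[OF integrable_LL_fst[OF integrable_abs[OF fY]]])
       (auto split: split_indicator)
  have "(\<integral>t. (T - t) * (f t * running_integral f t) \<partial>L)
      = (\<integral>t. \<integral>r. indicator {t..} r * (f t * running_integral f t) \<partial>L \<partial>L)"
    using integral_L_indicator_atLeast by (intro Bochner_Integration.integral_cong) auto
  also have "\<dots> = (\<integral>r. \<integral>t. indicator {t..} r * (f t * running_integral f t) \<partial>L \<partial>L)"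
    using LxL.Fubini_integral[OF int] by simp
  also have "\<dots> = (\<integral>r. (\<integral>s. indicator {..r} s * f s \<partial>L)\<^sup>2 / 2 \<partial>L)"
    by (intro Bochner_Integration.integral_cong refl
        trans[OF _ integral_upto_mult_running_integral[OF f]])
       (auto intro!: Bochner_Integration.integral_cong split: split_indicator)
  also have "0 \<le> \<dots>" by simp
  finally show ?thesis .
qed

lemma integral_Hker_path_nonneg:
  fixes f :: "real \<Rightarrow> real"
  assumes f: "integrable L f" and phi: "phi \<ge> 0" and rho: "rho \<ge> 0"
  shows "0 \<le> (\<integral>t. f t * ((phi * (T - t) + rho) * running_integral f t) \<partial>L)"
proof -
  have [measurable]: "f \<in> borel_measurable L" using f by auto
  define B where "B = (\<integral>s. \<bar>f s\<bar> \<partial>L)"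
  have fY: "integrable L (\<lambda>t. f t * running_integral f t)"
  proof (rule Bochner_Integration.integrable_bound)
    show "integrable L (\<lambda>t. B * \<bar>f t\<bar>)" using f by auto
    show "AE t in L. norm (f t * running_integral f t) \<le> norm (B * \<bar>f t\<bar>)"
      using abs_running_integral_le[OF f] integral_nonneg_AE[of "\<lambda>s. \<bar>f s\<bar>" L]
      by (auto simp: B_def abs_mult mult.commute intro!: mult_left_mono)
  qed simp
  have tfY: "integrable L (\<lambda>t. (T - t) * (f t * running_integral f t))"
  proof (rule Bochner_Integration.integrable_bound)
    show "integrable L (\<lambda>t. T * (f t * running_integral f t))" using fY by auto
    show "AE t in L. norm ((T - t) * (f t * running_integral f t)) \<le> norm (T * (f t * running_integral f t))"
      using T_pos by (intro AE_I2) (auto simp: abs_mult intro!: mult_right_mono)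
  qed simp
  have "(\<integral>t. f t * ((phi * (T - t) + rho) * running_integral f t) \<partial>L)
      = (\<integral>t. rho * (f t * running_integral f t) + phi * ((T - t) * (f t * running_integral f t)) \<partial>L)"
    by (intro Bochner_Integration.integral_cong) (auto simp: algebra_simps)
  also have "\<dots> = rho * (\<integral>t. f t * running_integral f t \<partial>L)
      + phi * (\<integral>t. (T - t) * (f t * running_integral f t) \<partial>L)"
    using fY tfY by simp
  also have "0 \<le> \<dots>"
    unfolding integral_mult_running_integral[OF f]
    using phi rho integral_remaining_time_mult_running_integral_nonneg[OF f fY]
    by (intro add_nonneg_nonneg mult_nonneg_nonneg) auto
  finally show ?thesis .
qed

lemma ip_volt_Hker_nonneg:
  assumes u: "u \<in> L2 M F T" and phi: "phi \<ge> 0" and rho: "rho \<ge> 0"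
  shows "0 \<le> ip M T u (volt (Hker T phi rho) u)"
proof -
  have "volt (Hker T phi rho) u t \<omega> = (phi * (T - t) + rho) * running_integral (\<lambda>s. u s \<omega>) t"
    if "t \<in> space L" for t \<omega>
    using that
    by (auto simp: volt_eq_integral_L Hker_def running_integral_def indicator_def
        intro!: trans[OF Bochner_Integration.integral_cong integral_mult_right_zero])
  then have path_eq: "(\<integral>t. u t \<omega> * volt (Hker T phi rho) u t \<omega> \<partial>L)
      = (\<integral>t. u t \<omega> * ((phi * (T - t) + rho) * running_integral (\<lambda>s. u s \<omega>) t) \<partial>L)" for \<omega>
    by (intro Bochner_Integration.integral_cong) auto
  show ?thesis
  proof (cases "integrable LM (\<lambda>z. u (fst z) (snd z) * volt (Hker T phi rho) u (fst z) (snd z))")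
    case True
    then have "ip M T u (volt (Hker T phi rho) u) = (\<integral>\<omega>. \<integral>t. u t \<omega> * volt (Hker T phi rho) u t \<omega> \<partial>L \<partial>M)"
      unfolding ip_eq_integral_LM using LxM.integral_snd[of "\<lambda>t \<omega>. u t \<omega> * volt (Hker T phi rho) u t \<omega>"]
      by (simp add: case_prod_beta')
    also have "0 \<le> \<dots>"
      using AE_integrable_path[OF u]
      by (intro integral_nonneg_AE) (auto elim!: AE_mp simp: path_eq intro!: integral_Hker_path_nonneg phi rho)
    finally show ?thesis .
  qed (simp add: ip_eq_integral_LM not_integrable_integral_eq)
qed

section \<open>The adjoint Volterra operator\<close>

lemma nn_integral_abs_kernel_row_mult_square_le:
  assumes K: "square_bounded_kernel K C" and w [measurable]: "w \<in> borel_measurable L"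
    and s: "s \<in> {0..T}"
  shows "(\<integral>\<^sup>+ t. ennreal \<bar>indicator {0..s} t * K s t\<bar> * ennreal \<bar>w t\<bar> \<partial>L)\<^sup>2
    \<le> ennreal C * (\<integral>\<^sup>+ t. ennreal ((w t)\<^sup>2) \<partial>L)"
proof -
  have [measurable]: "K s \<in> borel_measurable L" by (rule kernel_row_measurable[OF K])
  have "(\<integral>\<^sup>+ t. ennreal \<bar>indicator {0..s} t * K s t\<bar> * ennreal \<bar>w t\<bar> \<partial>L)\<^sup>2
      \<le> (\<integral>\<^sup>+ t. (ennreal \<bar>indicator {0..s} t * K s t\<bar>)\<^sup>2 \<partial>L) * (\<integral>\<^sup>+ t. (ennreal \<bar>w t\<bar>)\<^sup>2 \<partial>L)"
    by (rule Cauchy_Schwarz_nn_integral) measurable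
  also have "(\<integral>\<^sup>+ t. (ennreal \<bar>indicator {0..s} t * K s t\<bar>)\<^sup>2 \<partial>L)
      = (\<integral>\<^sup>+ t. ennreal ((K s t)\<^sup>2) * indicator {0..s} t \<partial>L)"
    by (intro nn_integral_cong) (auto simp: ennreal_power split: split_indicator)
  also have "(\<integral>\<^sup>+ t. (ennreal \<bar>w t\<bar>)\<^sup>2 \<partial>L) = (\<integral>\<^sup>+ t. ennreal ((w t)\<^sup>2) \<partial>L)"
    by (intro nn_integral_cong) (auto simp: ennreal_power)
  finally show ?thesis
    using kernel_row_nn_integral_le[OF K s] order_trans mult_right_mono by fastforce
qed

lemma integrable_LL_kernel_triangle:
  fixes w k :: "real \<Rightarrow> real"
  assumes K: "square_bounded_kernel K C"
    and w [measurable]: "w \<in> borel_measurable L" and w2: "integrable L (\<lambda>t. (w t)\<^sup>2)"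
    and k [measurable]: "k \<in> borel_measurable L" and k2: "integrable L (\<lambda>t. (k t)\<^sup>2)"
  shows "integrable (L \<Otimes>\<^sub>M L) (\<lambda>(t, s). indicator {t..T} s * K s t * w t * k s)"
  unfolding integrable_iff_bounded
proof
  have [measurable]: "(\<lambda>(t, s). K t s) \<in> borel_measurable (L \<Otimes>\<^sub>M L)"
    using kernel_measurable_LL[OF K] .
  have "(\<lambda>(t, s). indicator {t..T} s * K s t * w t * k s)
      = (\<lambda>p. (if fst p \<le> snd p \<and> snd p \<le> T then 1 else 0) * K (snd p) (fst p) * w (fst p) * k (snd p))"
    by (auto simp: fun_eq_iff split: split_indicator)
  then show meas: "(\<lambda>(t, s). indicator {t..T} s * K s t * w t * k s) \<in> borel_measurable (L \<Otimes>\<^sub>M L)"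
    by simp
  define X where "X s = (\<integral>\<^sup>+ t. ennreal \<bar>indicator {0..s} t * K s t\<bar> * ennreal \<bar>w t\<bar> \<partial>L)" for s
  have "(\<lambda>(s, t). ennreal \<bar>indicator {0..s} t * K s t\<bar> * ennreal \<bar>w t\<bar>)
      = (\<lambda>p. ennreal \<bar>(if 0 \<le> snd p \<and> snd p \<le> fst p then 1 else 0) * K (fst p) (snd p)\<bar> * ennreal \<bar>w (snd p)\<bar>)"
    by (auto simp: fun_eq_iff split: split_indicator)
  then have "X \<in> borel_measurable L"
    unfolding X_def by (intro L.borel_measurable_nn_integral) simp
  have "(\<integral>\<^sup>+ z. ennreal (norm ((\<lambda>(t, s). indicator {t..T} s * K s t * w t * k s) z)) \<partial>(L \<Otimes>\<^sub>M L))
      = (\<integral>\<^sup>+ s. \<integral>\<^sup>+ t. ennreal \<bar>indicator {t..T} s * K s t * w t * k s\<bar> \<partial>L \<partial>L)"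
    using meas by (subst LxL.nn_integral_snd[symmetric]) (auto simp: case_prod_beta)
  also have "\<dots> = (\<integral>\<^sup>+ s. X s * ennreal \<bar>k s\<bar> \<partial>L)"
  proof (intro nn_integral_cong)
    fix s assume s: "s \<in> space L"
    have [measurable]: "K s \<in> borel_measurable L" by (rule kernel_row_measurable[OF K])
    have "(\<integral>\<^sup>+ t. ennreal \<bar>indicator {t..T} s * K s t * w t * k s\<bar> \<partial>L)
        = (\<integral>\<^sup>+ t. ennreal \<bar>indicator {0..s} t * K s t\<bar> * ennreal \<bar>w t\<bar> * ennreal \<bar>k s\<bar> \<partial>L)"
      using s by (intro nn_integral_cong) (auto simp: abs_mult ennreal_mult split: split_indicator)
    also have "\<dots> = X s * ennreal \<bar>k s\<bar>"
      unfolding X_def by (rule nn_integral_multc) measurable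
    finally show "(\<integral>\<^sup>+ t. ennreal \<bar>indicator {t..T} s * K s t * w t * k s\<bar> \<partial>L) = X s * ennreal \<bar>k s\<bar>" .
  qed
  also have "\<dots> < \<infinity>"
  proof -
    have "(\<integral>\<^sup>+ s. X s * ennreal \<bar>k s\<bar> \<partial>L)\<^sup>2 \<le> (\<integral>\<^sup>+ s. (X s)\<^sup>2 \<partial>L) * (\<integral>\<^sup>+ s. (ennreal \<bar>k s\<bar>)\<^sup>2 \<partial>L)"
      by (rule Cauchy_Schwarz_nn_integral) (use \<open>X \<in> borel_measurable L\<close> in auto)
    also have "\<dots> \<le> (\<integral>\<^sup>+ s. ennreal C * (\<integral>\<^sup>+ t. ennreal ((w t)\<^sup>2) \<partial>L) \<partial>L) * (\<integral>\<^sup>+ s. ennreal ((k s)\<^sup>2) \<partial>L)"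
      unfolding X_def using nn_integral_abs_kernel_row_mult_square_le[OF K w]
      by (intro mult_mono nn_integral_mono) (auto simp: ennreal_power)
    also have "\<dots> < \<infinity>"
      using w2 k2 emeasure_L_space unfolding integrable_iff_bounded by (simp add: ennreal_mult_less_top)
    finally show ?thesis by (simp add: power_less_top_ennreal)
  qed
  finally show "(\<integral>\<^sup>+ z. ennreal (norm ((\<lambda>(t, s). indicator {t..T} s * K s t * w t * k s) z)) \<partial>(L \<Otimes>\<^sub>M L)) < \<infinity>" .
qed

lemma integral_kernel_triangle_swap:
  fixes w k :: "real \<Rightarrow> real"
  assumes K: "square_bounded_kernel K C"
    and w: "w \<in> borel_measurable L" "integrable L (\<lambda>t. (w t)\<^sup>2)"
    and k: "k \<in> borel_measurable L" "integrable L (\<lambda>t. (k t)\<^sup>2)"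
  shows "(\<integral>t. w t * (\<integral>s. indicator {t..T} s * K s t * k s \<partial>L) \<partial>L)
    = (\<integral>s. k s * (\<integral>t. indicator {0..s} t * K s t * w t \<partial>L) \<partial>L)"
proof -
  define \<Phi> where "\<Phi> t s = w t * (indicator {t..T} s * K s t * k s)" for t s
  have "integrable (L \<Otimes>\<^sub>M L) (\<lambda>(t, s). \<Phi> t s)"
    using integrable_LL_kernel_triangle[OF K w k] by (simp add: \<Phi>_def mult_ac)
  from LxL.Fubini_integral[OF this]
  have "(\<integral>t. \<integral>s. \<Phi> t s \<partial>L \<partial>L) = (\<integral>s. \<integral>t. \<Phi> t s \<partial>L \<partial>L)"
    by simp
  also have "\<dots> = (\<integral>s. k s * (\<integral>t. indicator {0..s} t * K s t * w t \<partial>L) \<partial>L)"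
  proof (intro Bochner_Integration.integral_cong refl)
    fix s assume "s \<in> space L"
    then have "\<Phi> t s = k s * (indicator {0..s} t * K s t * w t)" if "t \<in> space L" for t
      using that by (auto simp: \<Phi>_def split: split_indicator)
    then have "(\<integral>t. \<Phi> t s \<partial>L) = (\<integral>t. k s * (indicator {0..s} t * K s t * w t) \<partial>L)"
      by (intro Bochner_Integration.integral_cong) auto
    then show "(\<integral>t. \<Phi> t s \<partial>L) = k s * (\<integral>t. indicator {0..s} t * K s t * w t \<partial>L)"
      by simp
  qed
  finally show ?thesis by (simp add: \<Phi>_def)
qed

definition volt_adj :: "(real \<Rightarrow> real \<Rightarrow> real) \<Rightarrow> 'a proc \<Rightarrow> 'a proc" where
  "volt_adj K k t \<omega> = (\<integral>s. indicator {t..T} s * K s t * k s \<omega> \<partial>L)"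

lemma set_integral_eq_volt_adj:
  assumes "t \<in> {0..T}"
  shows "(LINT s:{t..T}|lborel. K s t * k s \<omega>) = volt_adj K k t \<omega>"
proof -
  have "volt_adj K k t \<omega> = (\<integral>s. indicator {0..T} s *\<^sub>R (indicator {t..T} s * K s t * k s \<omega>) \<partial>lborel)"
    unfolding volt_adj_def by (rule integral_restrict_space) simp
  also have "\<dots> = (\<integral>s. indicator {t..T} s *\<^sub>R (K s t * k s \<omega>) \<partial>lborel)"
    using assms by (intro Bochner_Integration.integral_cong) (auto split: split_indicator)
  finally show ?thesis by (simp add: set_lebesgue_integral_def)
qed

lemma volt_adj_measurable:
  assumes K: "square_bounded_kernel K C"
    and k: "(\<lambda>z. k (fst z) (snd z)) \<in> borel_measurable LM"
  shows "(\<lambda>z. volt_adj K k (fst z) (snd z)) \<in> borel_measurable LM"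
proof -
  have [measurable]: "(\<lambda>(t, s). K t s) \<in> borel_measurable (L \<Otimes>\<^sub>M L)"
    using kernel_measurable_LL[OF K] .
  have [measurable]: "(\<lambda>(s, \<omega>). k s \<omega>) \<in> borel_measurable LM"
    using k by (simp add: case_prod_beta')
  have [measurable]: "(\<lambda>p. fst (fst p)) \<in> borel_measurable (LM \<Otimes>\<^sub>M L)"
    and [measurable]: "snd \<in> borel_measurable (LM \<Otimes>\<^sub>M L)"
    by (rule measurable_compose[OF measurable_fst borel_measurable_LM_fst]
        measurable_compose[OF measurable_snd borel_measurable_L_id])+
  have "(\<lambda>p. (if fst (fst p) \<le> snd p \<and> snd p \<le> T then 1 else 0) * K (snd p) (fst (fst p))
        * k (snd p) (snd (fst p))) \<in> borel_measurable (LM \<Otimes>\<^sub>M L)"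
    by measurable
  then have "(\<lambda>z. \<integral>s. indicator {fst z..T} s * K s (fst z) * k s (snd z) \<partial>L) \<in> borel_measurable LM"
    by (intro L.borel_measurable_lebesgue_integral)
       (simp add: case_prod_beta indicator_def of_bool_def)
  then show ?thesis by (simp add: volt_adj_def)
qed

lemma volt_adj_square_le:
  assumes K: "square_bounded_kernel K C" and k: "(\<lambda>s. k s \<omega>) \<in> borel_measurable L"
  shows "ennreal ((volt_adj K k t \<omega>)\<^sup>2)
    \<le> (\<integral>\<^sup>+ s. ennreal ((K s t)\<^sup>2) * indicator {t..T} s \<partial>L) * (\<integral>\<^sup>+ s. ennreal ((k s \<omega>)\<^sup>2) \<partial>L)"
proof -
  have [measurable]: "(\<lambda>s. K s t) \<in> borel_measurable L" by (rule kernel_column_measurable[OF K])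
  have "(\<lambda>s. indicator {t..T} s * K s t) = (\<lambda>s. (if t \<le> s \<and> s \<le> T then 1 else 0) * K s t)"
    by (auto simp: fun_eq_iff split: split_indicator)
  then have "(\<lambda>s. indicator {t..T} s * K s t) \<in> borel_measurable L"
    by simp
  from square_integral_mult_le_nn_integral[OF this k]
  have "ennreal ((volt_adj K k t \<omega>)\<^sup>2)
      \<le> (\<integral>\<^sup>+ s. ennreal ((indicator {t..T} s * K s t)\<^sup>2) \<partial>L) * (\<integral>\<^sup>+ s. ennreal ((k s \<omega>)\<^sup>2) \<partial>L)"
    by (simp add: volt_adj_def)
  also have "(\<integral>\<^sup>+ s. ennreal ((indicator {t..T} s * K s t)\<^sup>2) \<partial>L)
      = (\<integral>\<^sup>+ s. ennreal ((K s t)\<^sup>2) * indicator {t..T} s \<partial>L)"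
    by (intro nn_integral_cong) (auto split: split_indicator)
  finally show ?thesis .
qed

lemma kernel_column_square_measurable:
  assumes K: "square_bounded_kernel K C"
  shows "(\<lambda>(t, s). ennreal ((K s t)\<^sup>2) * indicator {t..T} s) \<in> borel_measurable (L \<Otimes>\<^sub>M L)"
proof -
  have [measurable]: "(\<lambda>(t, s). K t s) \<in> borel_measurable (L \<Otimes>\<^sub>M L)"
    using kernel_measurable_LL[OF K] .
  have "(\<lambda>(t, s). ennreal ((K s t)\<^sup>2) * indicator {t..T} s)
      = (\<lambda>p. ennreal ((K (snd p) (fst p))\<^sup>2) * (if fst p \<le> snd p \<and> snd p \<le> T then 1 else 0))"
    by (auto simp: fun_eq_iff split: split_indicator)
  then show ?thesis by simp
qed

lemma nn_integral_kernel_columns_le: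
  assumes K: "square_bounded_kernel K C"
  shows "(\<integral>\<^sup>+ t. \<integral>\<^sup>+ s. ennreal ((K s t)\<^sup>2) * indicator {t..T} s \<partial>L \<partial>L) \<le> ennreal T * ennreal C"
proof -
  from LxL.Fubini'[OF kernel_column_square_measurable[OF K]]
  have "(\<integral>\<^sup>+ t. \<integral>\<^sup>+ s. ennreal ((K s t)\<^sup>2) * indicator {t..T} s \<partial>L \<partial>L)
      = (\<integral>\<^sup>+ s. \<integral>\<^sup>+ t. ennreal ((K s t)\<^sup>2) * indicator {t..T} s \<partial>L \<partial>L)"
    by simp
  also have "\<dots> \<le> (\<integral>\<^sup>+ s. ennreal C \<partial>L)"
  proof (intro nn_integral_mono)
    fix s assume s: "s \<in> space L"
    then have "(\<integral>\<^sup>+ t. ennreal ((K s t)\<^sup>2) * indicator {t..T} s \<partial>L)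
        = (\<integral>\<^sup>+ t. ennreal ((K s t)\<^sup>2) * indicator {0..s} t \<partial>L)"
      by (intro nn_integral_cong) (auto split: split_indicator)
    also have "\<dots> \<le> ennreal C" using s by (intro kernel_row_nn_integral_le[OF K]) auto
    finally show "(\<integral>\<^sup>+ t. ennreal ((K s t)\<^sup>2) * indicator {t..T} s \<partial>L) \<le> ennreal C" .
  qed
  also have "\<dots> = ennreal T * ennreal C" using emeasure_L_space by (simp add: mult.commute)
  finally show ?thesis .
qed

lemma sq_integrable_volt_adj:
  assumes K: "square_bounded_kernel K C" and k: "sq_integrable (\<lambda>z. k (fst z) (snd z))"
  shows "sq_integrable (\<lambda>z. volt_adj K k (fst z) (snd z))"
proof (rule sq_integrable_of_path_bound[OF _ _ _ k])
  have k_meas: "(\<lambda>z. k (fst z) (snd z)) \<in> borel_measurable LM"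
    using k by (simp add: sq_integrable_def)
  show "(\<lambda>z. volt_adj K k (fst z) (snd z)) \<in> borel_measurable LM"
    by (rule volt_adj_measurable[OF K k_meas])
  show "(\<lambda>t. \<integral>\<^sup>+ s. ennreal ((K s t)\<^sup>2) * indicator {t..T} s \<partial>L) \<in> borel_measurable L"
    using kernel_column_square_measurable[OF K] by (rule L.borel_measurable_nn_integral)
  show "(\<integral>\<^sup>+ t. \<integral>\<^sup>+ s. ennreal ((K s t)\<^sup>2) * indicator {t..T} s \<partial>L \<partial>L) < \<infinity>"
    using nn_integral_kernel_columns_le[OF K] by (simp add: le_less_trans ennreal_mult_less_top)
  show "ennreal ((volt_adj K k (fst (t, \<omega>)) (snd (t, \<omega>)))\<^sup>2)
      \<le> (\<integral>\<^sup>+ s. ennreal ((K s t)\<^sup>2) * indicator {t..T} s \<partial>L) * (\<integral>\<^sup>+ s. ennreal ((k s \<omega>)\<^sup>2) \<partial>L)"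
    if "\<omega> \<in> space M" for t \<omega>
    using volt_adj_square_le[of K C k \<omega> t, OF K measurable_section_L[OF k_meas that]] by simp
qed

lemma integral_LM_mult_volt_adj:
  assumes K: "square_bounded_kernel K C" and w: "w \<in> L2 M F T"
    and k: "sq_integrable (\<lambda>z. k (fst z) (snd z))"
  shows "integrable LM (\<lambda>z. w (fst z) (snd z) * volt_adj K k (fst z) (snd z))"
    and "(\<integral>z. w (fst z) (snd z) * volt_adj K k (fst z) (snd z) \<partial>LM)
      = (\<integral>z. k (fst z) (snd z) * volt K w (fst z) (snd z) \<partial>LM)"
proof -
  have k_meas: "(\<lambda>z. k (fst z) (snd z)) \<in> borel_measurable LM"
    using k by (simp add: sq_integrable_def)
  show wY: "integrable LM (\<lambda>z. w (fst z) (snd z) * volt_adj K k (fst z) (snd z))"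
    using sq_integrable_L2[OF w] sq_integrable_volt_adj[OF K k] by (rule integrable_mult_sq_integrable)
  have kV: "integrable LM (\<lambda>z. k (fst z) (snd z) * volt K w (fst z) (snd z))"
    using k sq_integrable_volt[OF K w] by (rule integrable_mult_sq_integrable)
  have "AE \<omega> in M. integrable L (\<lambda>t. (k t \<omega>)\<^sup>2)"
    using LxM.AE_integrable_snd[of "\<lambda>t \<omega>. (k t \<omega>)\<^sup>2"] k
    by (simp add: sq_integrable_def case_prod_beta')
  with AE_integrable_path[OF w] AE_space
  have "AE \<omega> in M. (\<integral>t. w t \<omega> * volt_adj K k t \<omega> \<partial>L) = (\<integral>s. k s \<omega> * volt K w s \<omega> \<partial>L)"
  proof eventually_elim
    case (elim \<omega>)
    have "(\<integral>s. k s \<omega> * volt K w s \<omega> \<partial>L)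
        = (\<integral>s. k s \<omega> * (\<integral>t. indicator {0..s} t * K s t * w t \<omega> \<partial>L) \<partial>L)"
      by (intro Bochner_Integration.integral_cong) (auto simp: volt_eq_integral_L)
    with elim show ?case
      using integral_kernel_triangle_swap[OF K measurable_section_L[OF L2_measurable[OF w]]
          _ measurable_section_L[OF k_meas]]
      by (simp add: volt_adj_def)
  qed
  then have "(\<integral>\<omega>. \<integral>t. w t \<omega> * volt_adj K k t \<omega> \<partial>L \<partial>M) = (\<integral>\<omega>. \<integral>s. k s \<omega> * volt K w s \<omega> \<partial>L \<partial>M)"
    by (rule integral_cong_AE[rotated 2])
       (use LxM.integrable_snd[of "\<lambda>t \<omega>. w t \<omega> * volt_adj K k t \<omega>"]
            LxM.integrable_snd[of "\<lambda>s \<omega>. k s \<omega> * volt K w s \<omega>"] wY kV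
         in \<open>auto simp: case_prod_beta'\<close>)
  then show "(\<integral>z. w (fst z) (snd z) * volt_adj K k (fst z) (snd z) \<partial>LM)
      = (\<integral>z. k (fst z) (snd z) * volt K w (fst z) (snd z) \<partial>LM)"
    using LxM.integral_snd[of "\<lambda>t \<omega>. w t \<omega> * volt_adj K k t \<omega>"]
      LxM.integral_snd[of "\<lambda>s \<omega>. k s \<omega> * volt K w s \<omega>"] wY kV
    by (simp add: case_prod_beta')
qed

context
  fixes w E Y :: "'a proc"
  assumes w: "w \<in> L2 M F T"
    and E [measurable]: "(\<lambda>z. E (fst z) (snd z)) \<in> borel_measurable LM"
    and Y [measurable]: "(\<lambda>z. Y (fst z) (snd z)) \<in> borel_measurable LM"
    and wY: "integrable LM (\<lambda>z. w (fst z) (snd z) * Y (fst z) (snd z))"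
    and E_eq: "\<And>t. t \<in> {0..T} \<Longrightarrow> AE \<omega> in M. E t \<omega> = real_cond_exp M (F t) (Y t) \<omega>"
begin

lemma integrable_LM_mult_cond_exp: "integrable LM (\<lambda>z. w (fst z) (snd z) * E (fst z) (snd z))"
proof -
  have [measurable]: "(\<lambda>z. w (fst z) (snd z)) \<in> borel_measurable LM"
    using L2_measurable[OF w] .
  have abs_le: "(\<integral>\<^sup>+ \<omega>. ennreal \<bar>w t \<omega>\<bar> * ennreal \<bar>E t \<omega>\<bar> \<partial>M)
      \<le> (\<integral>\<^sup>+ \<omega>. ennreal \<bar>w t \<omega>\<bar> * ennreal \<bar>Y t \<omega>\<bar> \<partial>M)" if t: "t \<in> space L" for t
  proof -
    interpret sigma_finite_subalgebra M "F t" using t by (intro sigma_finite_subalgebra_F) simp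
    have "(\<integral>\<^sup>+ \<omega>. ennreal \<bar>w t \<omega>\<bar> * ennreal \<bar>E t \<omega>\<bar> \<partial>M)
        = (\<integral>\<^sup>+ \<omega>. ennreal \<bar>w t \<omega>\<bar> * ennreal \<bar>real_cond_exp M (F t) (Y t) \<omega>\<bar> \<partial>M)"
      using E_eq[of t] t by (intro nn_integral_cong_AE) (auto elim!: AE_mp)
    also have "\<dots> \<le> (\<integral>\<^sup>+ \<omega>. ennreal \<bar>w t \<omega>\<bar> * ennreal \<bar>Y t \<omega>\<bar> \<partial>M)"
      using t progressive_measurable_F[OF L2_progressive[OF w]] measurable_section_M[OF Y]
      by (intro nn_integral_abs_mult_real_cond_exp_le) auto
    finally show ?thesis .
  qed
  have "(\<integral>\<^sup>+ z. ennreal (norm (w (fst z) (snd z) * E (fst z) (snd z))) \<partial>LM)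
      = (\<integral>\<^sup>+ t. \<integral>\<^sup>+ \<omega>. ennreal \<bar>w t \<omega>\<bar> * ennreal \<bar>E t \<omega>\<bar> \<partial>M \<partial>L)"
    by (subst M.nn_integral_fst[symmetric]) (auto simp: abs_mult ennreal_mult)
  also have "\<dots> \<le> (\<integral>\<^sup>+ t. \<integral>\<^sup>+ \<omega>. ennreal \<bar>w t \<omega>\<bar> * ennreal \<bar>Y t \<omega>\<bar> \<partial>M \<partial>L)"
    by (intro nn_integral_mono abs_le)
  also have "\<dots> = (\<integral>\<^sup>+ z. ennreal (norm (w (fst z) (snd z) * Y (fst z) (snd z))) \<partial>LM)"
    by (subst M.nn_integral_fst[symmetric]) (auto simp: abs_mult ennreal_mult)
  also have "\<dots> < \<infinity>" using wY by (simp add: integrable_iff_bounded)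
  finally show ?thesis
    by (simp add: integrable_iff_bounded)
qed

lemma integral_LM_mult_cond_exp:
  "(\<integral>z. w (fst z) (snd z) * E (fst z) (snd z) \<partial>LM) = (\<integral>z. w (fst z) (snd z) * Y (fst z) (snd z) \<partial>LM)"
proof -
  note wE = integrable_LM_mult_cond_exp
  have "integrable LM (\<lambda>(t, \<omega>). w t \<omega> * Y t \<omega>)"
    using wY by (simp add: case_prod_beta')
  from LxM.AE_integrable_fst[OF this] AE_space
  have "AE t in L. (\<integral>\<omega>. w t \<omega> * E t \<omega> \<partial>M) = (\<integral>\<omega>. w t \<omega> * Y t \<omega> \<partial>M)"
  proof eventually_elim
    case (elim t)
    interpret sigma_finite_subalgebra M "F t" using elim by (intro sigma_finite_subalgebra_F) simp
    have wF: "w t \<in> borel_measurable (F t)"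
      using elim progressive_measurable_F[OF L2_progressive[OF w]] by simp
    have "(\<integral>\<omega>. w t \<omega> * E t \<omega> \<partial>M) = (\<integral>\<omega>. w t \<omega> * real_cond_exp M (F t) (Y t) \<omega> \<partial>M)"
      using E_eq[of t] elim measurable_from_subalg[OF subalg wF] measurable_section_M[OF E]
      by (intro integral_cong_AE) (auto elim!: AE_mp)
    also have "\<dots> = (\<integral>\<omega>. w t \<omega> * Y t \<omega> \<partial>M)"
      using elim wF measurable_section_M[OF Y] by (intro real_cond_exp_intg(2)) auto
    finally show ?case .
  qed
  then have "(\<integral>t. \<integral>\<omega>. w t \<omega> * E t \<omega> \<partial>M \<partial>L) = (\<integral>t. \<integral>\<omega>. w t \<omega> * Y t \<omega> \<partial>M \<partial>L)"
    by (rule integral_cong_AE[rotated 2])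
       (use LxM.integrable_fst[of "\<lambda>t \<omega>. w t \<omega> * E t \<omega>"] LxM.integrable_fst[of "\<lambda>t \<omega>. w t \<omega> * Y t \<omega>"]
            wE wY in \<open>auto simp: case_prod_beta'\<close>)
  then show ?thesis
    using LxM.integral_fst[of "\<lambda>t \<omega>. w t \<omega> * E t \<omega>"] LxM.integral_fst[of "\<lambda>t \<omega>. w t \<omega> * Y t \<omega>"] wE wY
    by (simp add: case_prod_beta')
qed

end

section \<open>Signal and inventory\<close>

lemma integrable_LM_snd:
  fixes f :: "'a \<Rightarrow> real"
  assumes "integrable M f"
  shows "integrable LM (\<lambda>z. f (snd z))"
  unfolding integrable_iff_bounded
proof
  have [measurable]: "f \<in> borel_measurable M" using assms by auto
  show "(\<lambda>z. f (snd z)) \<in> borel_measurable LM" by measurable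
  have "(\<integral>\<^sup>+ z. ennreal (norm (f (snd z))) \<partial>LM) = (\<integral>\<^sup>+ t. \<integral>\<^sup>+ \<omega>. ennreal (norm (f \<omega>)) \<partial>M \<partial>L)"
    by (subst M.nn_integral_fst[symmetric]) auto
  also have "\<dots> = ennreal T * (\<integral>\<^sup>+ \<omega>. ennreal (norm (f \<omega>)) \<partial>M)"
    using emeasure_L_space by (simp add: mult.commute)
  also have "\<dots> < \<infinity>" using assms unfolding integrable_iff_bounded by (simp add: ennreal_mult_less_top)
  finally show "(\<integral>\<^sup>+ z. ennreal (norm (f (snd z))) \<partial>LM) < \<infinity>" .
qed

lemma sq_integrable_alpha:
  assumes S: "S \<in> L2 M F T" and ST_meas: "S T \<in> borel_measurable (F T)"
    and ST_sq: "integrable M (\<lambda>\<omega>. (S T \<omega>)\<^sup>2)" and alpha: "alpha_version M F T S alpha"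
  shows "sq_integrable (\<lambda>z. alpha (fst z) (snd z))"
proof -
  have [measurable]: "(\<lambda>z. alpha (fst z) (snd z)) \<in> borel_measurable LM"
    using alpha by (intro progressive_measurable_LM) (simp add: alpha_version_def)
  have [measurable]: "S T \<in> borel_measurable M"
    using measurable_from_subalg[OF subalgebra_F ST_meas] T_pos by simp
  have [measurable]: "(\<lambda>z. S (fst z) (snd z)) \<in> borel_measurable LM"
    using L2_measurable[OF S] .
  have bound_int: "integrable LM (\<lambda>z. 2 * (S T (snd z))\<^sup>2 + 2 * (S (fst z) (snd z))\<^sup>2)"
    using integrable_LM_snd[OF ST_sq] sq_integrable_L2[OF S] by (simp add: sq_integrable_def)
  have alpha_t: "(\<integral>\<^sup>+ \<omega>. ennreal ((alpha t \<omega>)\<^sup>2) \<partial>M) \<le> (\<integral>\<^sup>+ \<omega>. ennreal (2 * (S T \<omega>)\<^sup>2 + 2 * (S t \<omega>)\<^sup>2) \<partial>M)"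
    if t: "t \<in> space L" for t
  proof -
    interpret sigma_finite_subalgebra M "F t" using t by (intro sigma_finite_subalgebra_F) simp
    have [measurable]: "S t \<in> borel_measurable M"
      using measurable_section_M[OF L2_measurable[OF S] t] .
    have "AE \<omega> in M. alpha t \<omega> = real_cond_exp M (F t) (\<lambda>\<omega>. S T \<omega> - S t \<omega>) \<omega>"
      using alpha t unfolding alpha_version_def by simp
    then have "(\<integral>\<^sup>+ \<omega>. ennreal ((alpha t \<omega>)\<^sup>2) \<partial>M)
        = (\<integral>\<^sup>+ \<omega>. ennreal ((real_cond_exp M (F t) (\<lambda>\<omega>. S T \<omega> - S t \<omega>) \<omega>)\<^sup>2) \<partial>M)"
      by (intro nn_integral_cong_AE) (auto elim!: AE_mp)
    also have "\<dots> \<le> (\<integral>\<^sup>+ \<omega>. ennreal ((S T \<omega> - S t \<omega>)\<^sup>2) \<partial>M)"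
      by (intro nn_integral_square_real_cond_exp_le M.finite_measure_axioms) measurable
    also have "\<dots> \<le> (\<integral>\<^sup>+ \<omega>. ennreal (2 * (S T \<omega>)\<^sup>2 + 2 * (S t \<omega>)\<^sup>2) \<partial>M)"
      using power2_lincomb_le[of 1 "S T _" "-1" "S t _"] by (intro nn_integral_mono ennreal_leI) simp
    finally show ?thesis .
  qed
  have "(\<integral>\<^sup>+ z. ennreal (norm ((alpha (fst z) (snd z))\<^sup>2)) \<partial>LM)
      = (\<integral>\<^sup>+ t. \<integral>\<^sup>+ \<omega>. ennreal ((alpha t \<omega>)\<^sup>2) \<partial>M \<partial>L)"
    by (subst M.nn_integral_fst[symmetric]) auto
  also have "\<dots> \<le> (\<integral>\<^sup>+ t. \<integral>\<^sup>+ \<omega>. ennreal (2 * (S T \<omega>)\<^sup>2 + 2 * (S t \<omega>)\<^sup>2) \<partial>M \<partial>L)"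
    by (intro nn_integral_mono alpha_t)
  also have "\<dots> = (\<integral>\<^sup>+ z. ennreal (norm (2 * (S T (snd z))\<^sup>2 + 2 * (S (fst z) (snd z))\<^sup>2)) \<partial>LM)"
    by (subst M.nn_integral_fst[symmetric]) auto
  also have "\<dots> < \<infinity>"
    using bound_int by (simp add: integrable_iff_bounded)
  finally show ?thesis
    by (simp add: sq_integrable_def integrable_iff_bounded)
qed

lemma set_integral_eq_integral_L: "(LINT t:{0..T}|lborel. f t) = (\<integral>t. f t \<partial>L)" for f :: "real \<Rightarrow> real"
  by (simp add: set_lebesgue_integral_def integral_restrict_space)

lemma Xproc_eq_volt: "Xproc X0 p t \<omega> = X0 + volt (\<lambda>_ _. 1) p t \<omega>"
  by (simp add: Xproc_def volt_def)

lemma square_bounded_kernel_one: "square_bounded_kernel (\<lambda>_ _. 1) T"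
  unfolding square_bounded_kernel_def by (auto intro!: ennreal_leI)

lemma sq_integrable_Xproc: "p \<in> L2 M F T \<Longrightarrow> sq_integrable (\<lambda>z. Xproc X0 p (fst z) (snd z))"
  using sq_integrable_lincomb[OF sq_integrable_const[of X0] sq_integrable_volt[OF square_bounded_kernel_one], of p 1 1]
  by (simp add: Xproc_eq_volt)

lemma integrable_Xproc_T_square:
  assumes p: "p \<in> L2 M F T"
  shows "integrable M (\<lambda>\<omega>. (Xproc X0 p T \<omega>)\<^sup>2)"
proof -
  have V [measurable]: "volt (\<lambda>_ _. 1) p T \<in> borel_measurable M"
    using measurable_section_M[OF volt_measurable[OF square_bounded_kernel_one L2_measurable[OF p]]] T_pos
    by simp
  have "(\<integral>\<^sup>+ \<omega>. ennreal (norm ((volt (\<lambda>_ _. 1) p T \<omega>)\<^sup>2)) \<partial>M)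
      \<le> (\<integral>\<^sup>+ \<omega>. ennreal T * (\<integral>\<^sup>+ s. ennreal ((p s \<omega>)\<^sup>2) \<partial>L) \<partial>M)"
    using volt_square_le[where u = p and t = T, OF square_bounded_kernel_one
        measurable_section_L[OF L2_measurable[OF p]]] T_pos
    by (intro nn_integral_mono) simp
  also have "\<dots> = ennreal T * (\<integral>\<^sup>+ \<omega>. (\<integral>\<^sup>+ s. ennreal ((p s \<omega>)\<^sup>2) \<partial>L) \<partial>M)"
    using borel_measurable_nn_integral_path_square[OF L2_measurable[OF p]] by (rule nn_integral_cmult)
  also have "\<dots> < \<infinity>"
    using nn_integral_path_square_finite[OF sq_integrable_L2[OF p]] by (simp add: ennreal_mult_less_top)
  finally have "integrable M (\<lambda>\<omega>. (volt (\<lambda>_ _. 1) p T \<omega>)\<^sup>2)"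
    by (simp add: integrable_iff_bounded)
  then have "integrable M (\<lambda>\<omega>. 2 * X0\<^sup>2 * 1\<^sup>2 + 2 * 1\<^sup>2 * (volt (\<lambda>_ _. 1) p T \<omega>)\<^sup>2)"
    by simp
  then show ?thesis
    by (rule Bochner_Integration.integrable_bound)
       (use power2_lincomb_le[of 1 X0 1] in \<open>auto simp: Xproc_eq_volt\<close>)
qed

lemma Xproc_pconv:
  assumes u: "u \<in> L2 M F T" and v: "v \<in> L2 M F T" and \<omega>: "\<omega> \<in> space M"
    and paths: "integrable L (\<lambda>s. (u s \<omega>)\<^sup>2)" "integrable L (\<lambda>s. (v s \<omega>)\<^sup>2)" and t: "t \<in> {0..T}"
  shows "Xproc X0 (pconv \<theta> u v) t \<omega> = \<theta> * Xproc X0 u t \<omega> + (1 - \<theta>) * Xproc X0 v t \<omega>"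
  using volt_lincomb[where u = u and v = v, OF square_bounded_kernel_one t
      measurable_section_L[OF L2_measurable[OF u] \<omega>] paths(1)
      measurable_section_L[OF L2_measurable[OF v] \<omega>] paths(2), of \<theta> "1 - \<theta>"]
  by (simp add: Xproc_eq_volt pconv_def padd_def pscale_def algebra_simps)

lemma AE_Xproc_pconv:
  assumes u: "u \<in> L2 M F T" and v: "v \<in> L2 M F T"
  shows "AE \<omega> in M. \<forall>t\<in>{0..T}. Xproc X0 (pconv \<theta> u v) t \<omega> = \<theta> * Xproc X0 u t \<omega> + (1 - \<theta>) * Xproc X0 v t \<omega>"
  using AE_integrable_path[OF u] AE_integrable_path[OF v] AE_space
  by eventually_elim (simp add: Xproc_pconv[OF u v])

lemma integral_Xproc_square_pconv_le:
  assumes u: "u \<in> L2 M F T" and v: "v \<in> L2 M F T" and \<theta>: "0 \<le> \<theta>" "\<theta> \<le> 1"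
  shows "(\<integral>z. (Xproc X0 (pconv \<theta> u v) (fst z) (snd z))\<^sup>2 \<partial>LM)
    \<le> \<theta> * (\<integral>z. (Xproc X0 u (fst z) (snd z))\<^sup>2 \<partial>LM) + (1 - \<theta>) * (\<integral>z. (Xproc X0 v (fst z) (snd z))\<^sup>2 \<partial>LM)"
proof -
  have int: "integrable LM (\<lambda>z. (Xproc X0 p (fst z) (snd z))\<^sup>2)" if "p \<in> L2 M F T" for p
    using sq_integrable_Xproc[OF that] by (simp add: sq_integrable_def)
  have "AE z in LM. (Xproc X0 (pconv \<theta> u v) (fst z) (snd z))\<^sup>2
      \<le> \<theta> * (Xproc X0 u (fst z) (snd z))\<^sup>2 + (1 - \<theta>) * (Xproc X0 v (fst z) (snd z))\<^sup>2"
    using AE_LM_of_AE_M[OF AE_Xproc_pconv[of u v X0 \<theta>, OF u v]] AE_space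
  proof eventually_elim
    case (elim z)
    then show ?case
      using power2_convex_comb_le[OF \<theta>] by (auto simp: space_pair_measure)
  qed
  then have "(\<integral>z. (Xproc X0 (pconv \<theta> u v) (fst z) (snd z))\<^sup>2 \<partial>LM)
      \<le> (\<integral>z. \<theta> * (Xproc X0 u (fst z) (snd z))\<^sup>2 + (1 - \<theta>) * (Xproc X0 v (fst z) (snd z))\<^sup>2 \<partial>LM)"
    using int[OF L2_pconv[OF u v]] int[OF u] int[OF v] by (intro integral_mono_AE) auto
  then show ?thesis using int[OF u] int[OF v] by simp
qed

lemma integral_Xproc_T_square_pconv_le:
  assumes u: "u \<in> L2 M F T" and v: "v \<in> L2 M F T" and \<theta>: "0 \<le> \<theta>" "\<theta> \<le> 1"
  shows "(\<integral>\<omega>. (Xproc X0 (pconv \<theta> u v) T \<omega>)\<^sup>2 \<partial>M)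
    \<le> \<theta> * (\<integral>\<omega>. (Xproc X0 u T \<omega>)\<^sup>2 \<partial>M) + (1 - \<theta>) * (\<integral>\<omega>. (Xproc X0 v T \<omega>)\<^sup>2 \<partial>M)"
proof -
  have "AE \<omega> in M. (Xproc X0 (pconv \<theta> u v) T \<omega>)\<^sup>2 \<le> \<theta> * (Xproc X0 u T \<omega>)\<^sup>2 + (1 - \<theta>) * (Xproc X0 v T \<omega>)\<^sup>2"
    using AE_Xproc_pconv[of u v X0 \<theta>, OF u v]
    by eventually_elim (use T_pos power2_convex_comb_le[OF \<theta>] in simp)
  then have "(\<integral>\<omega>. (Xproc X0 (pconv \<theta> u v) T \<omega>)\<^sup>2 \<partial>M)
      \<le> (\<integral>\<omega>. \<theta> * (Xproc X0 u T \<omega>)\<^sup>2 + (1 - \<theta>) * (Xproc X0 v T \<omega>)\<^sup>2 \<partial>M)"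
    using integrable_Xproc_T_square[OF L2_pconv[OF u v]] integrable_Xproc_T_square[OF u]
      integrable_Xproc_T_square[OF v]
    by (intro integral_mono_AE) auto
  then show ?thesis
    using integrable_Xproc_T_square[OF u] integrable_Xproc_T_square[OF v] by simp
qed

end

section \<open>Convexity of the impact term\<close>

locale impact_model = filtered_horizon M F T + bounded_derivative h h' B
  for M :: "'a measure" and F T h h' B +
  fixes G :: "real \<Rightarrow> real \<Rightarrow> real" and CG :: real and g :: "'a proc"
  assumes G: "square_bounded_kernel G CG" and g: "g \<in> L2 M F T"
begin

lemma sq_integrable_comp_h: "sq_integrable f \<Longrightarrow> sq_integrable (\<lambda>z. h (f z))"
proof -
  assume f: "sq_integrable f"
  then have [measurable]: "f \<in> borel_measurable LM" by (simp add: sq_integrable_def)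
  have "sq_integrable (\<lambda>z. \<bar>f z\<bar>)" by (rule sq_integrable_dominated[OF f, of _ 1]) auto
  then have "sq_integrable (\<lambda>z. \<bar>h 0\<bar> * 1 + B * \<bar>f z\<bar>)"
    by (rule sq_integrable_lincomb[OF sq_integrable_const])
  then show ?thesis
    by (rule sq_integrable_dominated[of _ _ 1]) (use abs_le_linear bound_nonneg in auto)
qed

lemma sq_integrable_Zproc: "u \<in> L2 M F T \<Longrightarrow> sq_integrable (\<lambda>z. Zproc g G u (fst z) (snd z))"
  using sq_integrable_lincomb[OF sq_integrable_L2[OF g] sq_integrable_volt[OF G], of u 1 1]
  by (simp add: Zproc_def)

lemma AE_Zproc_pconv:
  assumes u: "u \<in> L2 M F T" and v: "v \<in> L2 M F T"
  shows "AE z in LM. \<forall>y. Zproc g G (pconv y u v) (fst z) (snd z)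
    = Zproc g G v (fst z) (snd z) + y * volt G (pdiff u v) (fst z) (snd z)"
proof -
  have "AE z in LM. integrable L (\<lambda>s. (u s (snd z))\<^sup>2) \<and> integrable L (\<lambda>s. (v s (snd z))\<^sup>2)"
    using AE_integrable_path[OF u] AE_integrable_path[OF v]
    by (intro AE_LM_of_AE_M) (auto elim!: AE_mp)
  then show ?thesis
    using AE_space
  proof eventually_elim
    case (elim z)
    then have t: "fst z \<in> {0..T}" and \<omega>: "snd z \<in> space M" by (auto simp: space_pair_measure)
    from elim have "integrable L (\<lambda>s. (u s (snd z))\<^sup>2)" "integrable L (\<lambda>s. (v s (snd z))\<^sup>2)"
      by auto
    note lincomb = volt_lincomb[where u = u and v = v and \<omega> = "snd z", OF G t measurable_section_L[OF L2_measurable[OF u] \<omega>] this(1)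
        measurable_section_L[OF L2_measurable[OF v] \<omega>] this(2)]
    have V1: "volt G (pconv y u v) (fst z) (snd z) = y * volt G u (fst z) (snd z) + (1 - y) * volt G v (fst z) (snd z)"
      for y
      using lincomb[of y "1 - y"] elim by (simp add: pconv_def padd_def pscale_def)
    have V2: "volt G (pdiff u v) (fst z) (snd z) = volt G u (fst z) (snd z) - volt G v (fst z) (snd z)"
      using lincomb[of 1 "-1"] elim by (simp add: pdiff_def)
    show ?case by (simp add: Zproc_def V1 V2 algebra_simps)
  qed
qed

definition impact :: "'a proc \<Rightarrow> real" where
  "impact p = (\<integral>z. h (Zproc g G p (fst z) (snd z)) * p (fst z) (snd z) \<partial>LM)"

definition impact_slope :: "'a proc \<Rightarrow> 'a proc \<Rightarrow> real \<Rightarrow> real" where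
  "impact_slope u v y =
     ip M T (pdiff u v) (\<lambda>t \<omega>. h (Zproc g G (pconv y u v) t \<omega>))
     + ip M T (\<lambda>t \<omega>. h' (Zproc g G (pconv y u v) t \<omega>) * pconv y u v t \<omega>) (volt G (pdiff u v))"

lemma impact_pconv_eq_line_integral:
  assumes u: "u \<in> L2 M F T" and v: "v \<in> L2 M F T"
  shows "impact (pconv y u v) = (\<integral>z. h (Zproc g G v (fst z) (snd z) + y * volt G (pdiff u v) (fst z) (snd z))
    * (v (fst z) (snd z) + y * pdiff u v (fst z) (snd z)) \<partial>LM)"
  unfolding impact_def
proof (rule integral_cong_AE)
  show "(\<lambda>z. h (Zproc g G (pconv y u v) (fst z) (snd z)) * pconv y u v (fst z) (snd z)) \<in> borel_measurable LM"
    using integrable_mult_sq_integrable[OF sq_integrable_comp_h[OF sq_integrable_Zproc[OF L2_pconv[OF u v]]]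
        sq_integrable_L2[OF L2_pconv[OF u v]]] by auto
  have "sq_integrable (\<lambda>z. Zproc g G v (fst z) (snd z) + y * volt G (pdiff u v) (fst z) (snd z))"
    using sq_integrable_lincomb[OF sq_integrable_Zproc[OF v] sq_integrable_volt[OF G L2_pdiff[OF u v]], of 1 y]
    by simp
  moreover have "sq_integrable (\<lambda>z. v (fst z) (snd z) + y * pdiff u v (fst z) (snd z))"
    using sq_integrable_lincomb[OF sq_integrable_L2[OF v] sq_integrable_L2[OF L2_pdiff[OF u v]], of 1 y]
    by simp
  ultimately show "(\<lambda>z. h (Zproc g G v (fst z) (snd z) + y * volt G (pdiff u v) (fst z) (snd z))
      * (v (fst z) (snd z) + y * pdiff u v (fst z) (snd z))) \<in> borel_measurable LM"
    using integrable_mult_sq_integrable[OF sq_integrable_comp_h] by blast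
  show "AE z in LM. h (Zproc g G (pconv y u v) (fst z) (snd z)) * pconv y u v (fst z) (snd z)
      = h (Zproc g G v (fst z) (snd z) + y * volt G (pdiff u v) (fst z) (snd z))
        * (v (fst z) (snd z) + y * pdiff u v (fst z) (snd z))"
    using AE_Zproc_pconv[OF u v] by eventually_elim (simp add: algebra_simps)
qed

lemma has_real_derivative_impact_pconv:
  assumes u: "u \<in> L2 M F T" and v: "v \<in> L2 M F T"
  shows "((\<lambda>y. impact (pconv y u v)) has_real_derivative impact_slope u v x) (at x)"
proof -
  define a where "a z = Zproc g G v (fst z) (snd z)" for z
  define b where "b z = volt G (pdiff u v) (fst z) (snd z)" for z
  define c where "c z = v (fst z) (snd z)" for z
  define d where "d z = pdiff u v (fst z) (snd z)" for z
  have sq: "sq_integrable a" "sq_integrable b" "sq_integrable c" "sq_integrable d"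
    unfolding a_def b_def c_def d_def
    using sq_integrable_Zproc[OF v] sq_integrable_volt[OF G L2_pdiff[OF u v]]
      sq_integrable_L2[OF v] sq_integrable_L2[OF L2_pdiff[OF u v]] by auto
  then have [measurable]: "a \<in> borel_measurable LM" "b \<in> borel_measurable LM"
    "c \<in> borel_measurable LM" "d \<in> borel_measurable LM"
    by (simp_all add: sq_integrable_def)
  have line: "sq_integrable (\<lambda>z. a z + y * b z)" "sq_integrable (\<lambda>z. c z + y * d z)" for y
    using sq_integrable_lincomb[OF sq(1,2), of 1 y] sq_integrable_lincomb[OF sq(3,4), of 1 y] by simp_all
  have h'_b: "sq_integrable (\<lambda>z. h' (a z + x * b z) * b z)"
    by (rule sq_integrable_dominated[OF sq(2), of _ B]) (auto simp: abs_mult intro: mult_right_mono deriv_bound)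
  have [measurable]: "(\<lambda>z. Zproc g G (pconv x u v) (fst z) (snd z)) \<in> borel_measurable LM"
    "(\<lambda>z. u (fst z) (snd z)) \<in> borel_measurable LM" "(\<lambda>z. v (fst z) (snd z)) \<in> borel_measurable LM"
    using sq_integrable_Zproc[OF L2_pconv[OF u v]] L2_measurable[OF u] L2_measurable[OF v]
    by (simp_all add: sq_integrable_def)
  have on_line: "AE z in LM. Zproc g G (pconv x u v) (fst z) (snd z) = a z + x * b z
      \<and> pconv x u v (fst z) (snd z) = c z + x * d z"
    using AE_Zproc_pconv[OF u v] by eventually_elim (simp add: a_def b_def c_def d_def algebra_simps)
  have "impact_slope u v x
      = (\<integral>z. d z * h (Zproc g G (pconv x u v) (fst z) (snd z)) \<partial>LM)
        + (\<integral>z. h' (Zproc g G (pconv x u v) (fst z) (snd z)) * pconv x u v (fst z) (snd z) * b z \<partial>LM)"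
    unfolding impact_slope_def ip_eq_integral_LM d_def b_def by simp
  also have "\<dots> = (\<integral>z. h (a z + x * b z) * d z \<partial>LM) + (\<integral>z. h' (a z + x * b z) * b z * (c z + x * d z) \<partial>LM)"
    using on_line by (intro arg_cong2[where f = "(+)"] integral_cong_AE) (auto elim!: AE_mp)
  also have "\<dots> = (\<integral>z. h' (a z + x * b z) * b z * (c z + x * d z) + h (a z + x * b z) * d z \<partial>LM)"
    using integrable_mult_sq_integrable[OF h'_b line(2)]
      integrable_mult_sq_integrable[OF sq_integrable_comp_h[OF line(1)] sq(4)]
    by simp
  finally have slope_eq: "impact_slope u v x
      = (\<integral>z. h' (a z + x * b z) * b z * (c z + x * d z) + h (a z + x * b z) * d z \<partial>LM)" .
  have "((\<lambda>y. \<integral>z. h (a z + y * b z) * (c z + y * d z) \<partial>LM) has_real_derivative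
      (\<integral>z. h' (a z + x * b z) * b z * (c z + x * d z) + h (a z + x * b z) * d z \<partial>LM)) (at x)"
    using integrable_abs_mult_sq_integrable[OF sq(2,3)] integrable_abs_mult_sq_integrable[OF sq(2,4)]
      integrable_mult_sq_integrable[OF sq_integrable_comp_h[OF line(1)] line(2)]
      integrable_mult_sq_integrable[OF sq_integrable_comp_h[OF line(1)] sq(4)]
    by (intro has_real_derivative_integral_along_line) measurable
  then show ?thesis
    unfolding slope_eq impact_pconv_eq_line_integral[OF u v] a_def b_def c_def d_def .
qed

lemma sq_integrable_h'_Zproc_mult:
  assumes p: "p \<in> L2 M F T"
  shows "sq_integrable (\<lambda>z. h' (Zproc g G p (fst z) (snd z)) * p (fst z) (snd z))"
proof (rule sq_integrable_dominated[OF sq_integrable_L2[OF p], of _ B])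
  have [measurable]: "(\<lambda>z. Zproc g G p (fst z) (snd z)) \<in> borel_measurable LM"
    "(\<lambda>z. p (fst z) (snd z)) \<in> borel_measurable LM"
    using sq_integrable_Zproc[OF p] L2_measurable[OF p] by (simp_all add: sq_integrable_def)
  show "(\<lambda>z. h' (Zproc g G p (fst z) (snd z)) * p (fst z) (snd z)) \<in> borel_measurable LM"
    by measurable
qed (auto simp: abs_mult intro: mult_right_mono deriv_bound)

lemma AE_A_version_eq_cond_exp:
  assumes A: "A_version M F T h h' G g Aop" and p: "p \<in> L2 M F T" and t: "t \<in> {0..T}"
  shows "AE \<omega> in M. Aop p t \<omega> - h (Zproc g G p t \<omega>)
    = real_cond_exp M (F t) (volt_adj G (\<lambda>s \<omega>. h' (Zproc g G p s \<omega>) * p s \<omega>) t) \<omega>"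
proof -
  have "volt_adj G (\<lambda>s \<omega>. h' (Zproc g G p s \<omega>) * p s \<omega>) t
      = (\<lambda>\<omega>. LINT s:{t..T}|lborel. G s t * (h' (Zproc g G p s \<omega>) * p s \<omega>))"
    using set_integral_eq_volt_adj[OF t, of G "\<lambda>s \<omega>. h' (Zproc g G p s \<omega>) * p s \<omega>"]
    by (simp add: fun_eq_iff)
  moreover have "AE \<omega> in M. Aop p t \<omega> = h (Zproc g G p t \<omega>)
      + real_cond_exp M (F t) (\<lambda>\<omega>'. LINT s:{t..T}|lborel. G s t * (h' (Zproc g G p s \<omega>') * p s \<omega>')) \<omega>"
    using A p t unfolding A_version_def by blast
  ultimately show ?thesis by (auto elim!: AE_mp)
qed

text \<open>The h' part of the derivative is moved onto w by the adjoint of the Volterra operator; the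
  conditional expectation in A can then be inserted because w is progressive.\<close>

lemma ip_A_version:
  assumes A: "A_version M F T h h' G g Aop" and p: "p \<in> L2 M F T" and w: "w \<in> L2 M F T"
  shows "integrable LM (\<lambda>z. w (fst z) (snd z) * Aop p (fst z) (snd z))"
    and "ip M T w (\<lambda>t \<omega>. h (Zproc g G p t \<omega>)) + ip M T (\<lambda>t \<omega>. h' (Zproc g G p t \<omega>) * p t \<omega>) (volt G w)
      = ip M T w (Aop p)"
proof -
  define k where "k t \<omega> = h' (Zproc g G p t \<omega>) * p t \<omega>" for t \<omega>
  define E where "E t \<omega> = Aop p t \<omega> - h (Zproc g G p t \<omega>)" for t \<omega>
  have hZ: "sq_integrable (\<lambda>z. h (Zproc g G p (fst z) (snd z)))"
    by (rule sq_integrable_comp_h[OF sq_integrable_Zproc[OF p]])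
  have k: "sq_integrable (\<lambda>z. k (fst z) (snd z))"
    unfolding k_def by (rule sq_integrable_h'_Zproc_mult[OF p])
  have [measurable]: "(\<lambda>z. Aop p (fst z) (snd z)) \<in> borel_measurable LM"
    using A p by (intro progressive_measurable_LM) (simp add: A_version_def)
  have [measurable]: "(\<lambda>z. h (Zproc g G p (fst z) (snd z))) \<in> borel_measurable LM"
    using hZ by (simp add: sq_integrable_def)
  have "(\<lambda>z. E (fst z) (snd z)) \<in> borel_measurable LM"
    unfolding E_def by measurable
  note cond_exp_assms = w this volt_adj_measurable[OF G k[unfolded sq_integrable_def, THEN conjunct1]]
    integral_LM_mult_volt_adj(1)[OF G w k] AE_A_version_eq_cond_exp[OF A p, folded E_def k_def]
  have wh: "integrable LM (\<lambda>z. w (fst z) (snd z) * h (Zproc g G p (fst z) (snd z)))"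
    by (rule integrable_mult_sq_integrable[OF sq_integrable_L2[OF w] hZ])
  have A_split: "Aop p t \<omega> = h (Zproc g G p t \<omega>) + E t \<omega>" for t \<omega>
    by (simp add: E_def)
  show "integrable LM (\<lambda>z. w (fst z) (snd z) * Aop p (fst z) (snd z))"
    unfolding A_split distrib_left using wh integrable_LM_mult_cond_exp[OF cond_exp_assms] by simp
  have "ip M T w (Aop p) = (\<integral>z. w (fst z) (snd z) * h (Zproc g G p (fst z) (snd z)) \<partial>LM)
      + (\<integral>z. w (fst z) (snd z) * E (fst z) (snd z) \<partial>LM)"
    unfolding ip_eq_integral_LM A_split distrib_left
    using wh integrable_LM_mult_cond_exp[OF cond_exp_assms] by simp
  also have "(\<integral>z. w (fst z) (snd z) * E (fst z) (snd z) \<partial>LM)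
      = (\<integral>z. k (fst z) (snd z) * volt G w (fst z) (snd z) \<partial>LM)"
    using integral_LM_mult_cond_exp[OF cond_exp_assms] integral_LM_mult_volt_adj(2)[OF G w k] by simp
  finally show "ip M T w (\<lambda>t \<omega>. h (Zproc g G p t \<omega>)) + ip M T (\<lambda>t \<omega>. h' (Zproc g G p t \<omega>) * p t \<omega>) (volt G w)
      = ip M T w (Aop p)"
    by (simp add: ip_eq_integral_LM k_def)
qed

lemma impact_slope_mono:
  assumes A: "A_version M F T h h' G g Aop" and mono: "monotone_op M F T Aop"
    and u: "u \<in> L2 M F T" and v: "v \<in> L2 M F T" and y: "y1 \<le> y2"
  shows "impact_slope u v y1 \<le> impact_slope u v y2"
proof -
  define w where "w = pdiff u v"
  have w: "w \<in> L2 M F T" unfolding w_def by (rule L2_pdiff[OF u v])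
  note pA = ip_A_version[OF A L2_pconv[OF u v] w]
  have slope: "impact_slope u v y = (\<integral>z. w (fst z) (snd z) * Aop (pconv y u v) (fst z) (snd z) \<partial>LM)" for y
    using pA(2)[of y] by (simp add: impact_slope_def w_def ip_eq_integral_LM)
  define wA where "wA y z = w (fst z) (snd z) * Aop (pconv y u v) (fst z) (snd z)" for y z
  have "0 \<le> ip M T (pdiff (pconv y2 u v) (pconv y1 u v)) (pdiff (Aop (pconv y2 u v)) (Aop (pconv y1 u v)))"
    using mono L2_pconv[OF u v] unfolding monotone_op_def by blast
  also have "\<dots> = (\<integral>z. (y2 - y1) * (wA y2 z - wA y1 z) \<partial>LM)"
    unfolding ip_eq_integral_LM by (simp add: wA_def w_def algebra_simps)
  also have "\<dots> = (y2 - y1) * (impact_slope u v y2 - impact_slope u v y1)"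
    unfolding slope using pA(1)[of y1] pA(1)[of y2] by (simp add: wA_def[abs_def])
  finally show ?thesis
    using y by (cases "y1 = y2") (auto simp: zero_le_mult_iff)
qed

lemma impact_pconv_le:
  assumes A: "A_version M F T h h' G g Aop" and mono: "monotone_op M F T Aop"
    and u: "u \<in> L2 M F T" and v: "v \<in> L2 M F T" and \<theta>: "0 \<le> \<theta>" "\<theta> \<le> 1"
  shows "impact (pconv \<theta> u v) \<le> \<theta> * impact u + (1 - \<theta>) * impact v"
proof -
  have "convex_on UNIV (\<lambda>y. impact (pconv y u v))"
    using has_real_derivative_impact_pconv[OF u v] impact_slope_mono[OF A mono u v]
    by (intro convex_on_realI[where f' = "impact_slope u v"]) auto
  from convex_onD[OF this, of "1 - \<theta>" 1 0] \<theta> show ?thesis by simp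
qed

end

section \<open>Strong concavity of the performance functional\<close>

locale execution_model = impact_model M F T h h' B G CG g
  for M :: "'a measure" and F T h h' B G CG g +
  fixes alpha :: "'a proc"
  assumes alpha: "sq_integrable (\<lambda>z. alpha (fst z) (snd z))"
begin

lemma J_eq:
  assumes p: "p \<in> L2 M F T"
  shows "J M T X0 gam phi rho S alpha h G g p =
    (\<integral>z. alpha (fst z) (snd z) * p (fst z) (snd z) \<partial>LM) - gam / 2 * (\<integral>z. (p (fst z) (snd z))\<^sup>2 \<partial>LM)
    - impact p - phi / 2 * (\<integral>z. (Xproc X0 p (fst z) (snd z))\<^sup>2 \<partial>LM)
    - rho / 2 * (\<integral>\<omega>. (Xproc X0 p T \<omega>)\<^sup>2 \<partial>M) + X0 * (\<integral>\<omega>. S T \<omega> \<partial>M)"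
proof -
  define f where "f t \<omega> = (alpha t \<omega> - gam / 2 * p t \<omega> - h (Zproc g G p t \<omega>)) * p t \<omega>" for t \<omega>
  define X2 where "X2 t \<omega> = (Xproc X0 p t \<omega>)\<^sup>2" for t \<omega>
  have ap: "integrable LM (\<lambda>z. alpha (fst z) (snd z) * p (fst z) (snd z))"
    and pp: "integrable LM (\<lambda>z. (p (fst z) (snd z))\<^sup>2)"
    and hp: "integrable LM (\<lambda>z. h (Zproc g G p (fst z) (snd z)) * p (fst z) (snd z))"
    using integrable_mult_sq_integrable[OF alpha sq_integrable_L2[OF p]] sq_integrable_L2[OF p]
      integrable_mult_sq_integrable[OF sq_integrable_comp_h[OF sq_integrable_Zproc[OF p]] sq_integrable_L2[OF p]]
    by (auto simp: sq_integrable_def)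
  have "(\<lambda>z. f (fst z) (snd z)) = (\<lambda>z. alpha (fst z) (snd z) * p (fst z) (snd z)
      - gam / 2 * (p (fst z) (snd z))\<^sup>2 - h (Zproc g G p (fst z) (snd z)) * p (fst z) (snd z))"
    by (auto simp: f_def fun_eq_iff algebra_simps power2_eq_square)
  then have f_int: "integrable LM (\<lambda>(t, \<omega>). f t \<omega>)"
    and f_eq: "(\<integral>z. f (fst z) (snd z) \<partial>LM) = (\<integral>z. alpha (fst z) (snd z) * p (fst z) (snd z) \<partial>LM)
      - gam / 2 * (\<integral>z. (p (fst z) (snd z))\<^sup>2 \<partial>LM) - impact p"
    using ap pp hp by (simp_all add: case_prod_beta' impact_def)
  have X2_int: "integrable LM (\<lambda>(t, \<omega>). X2 t \<omega>)"
    using sq_integrable_Xproc[OF p] by (simp add: sq_integrable_def X2_def case_prod_beta')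
  have XT_int: "integrable M (\<lambda>\<omega>. (Xproc X0 p T \<omega>)\<^sup>2)"
    by (rule integrable_Xproc_T_square[OF p])
  have "(\<integral>\<omega>. (LINT t:{0..T}|lborel. (alpha t \<omega> - gam / 2 * p t \<omega> - h (Zproc g G p t \<omega>)) * p t \<omega>)
        - phi / 2 * (LINT t:{0..T}|lborel. (Xproc X0 p t \<omega>)\<^sup>2) - rho / 2 * (Xproc X0 p T \<omega>)\<^sup>2 \<partial>M)
      = (\<integral>\<omega>. (\<integral>t. f t \<omega> \<partial>L) - phi / 2 * (\<integral>t. X2 t \<omega> \<partial>L) - rho / 2 * (Xproc X0 p T \<omega>)\<^sup>2 \<partial>M)"
    by (simp add: set_integral_eq_integral_L f_def X2_def)
  also have "\<dots> = (\<integral>\<omega>. \<integral>t. f t \<omega> \<partial>L \<partial>M) - phi / 2 * (\<integral>\<omega>. \<integral>t. X2 t \<omega> \<partial>L \<partial>M)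
      - rho / 2 * (\<integral>\<omega>. (Xproc X0 p T \<omega>)\<^sup>2 \<partial>M)"
    using LxM.integrable_snd[OF f_int] LxM.integrable_snd[OF X2_int] XT_int by simp
  also have "\<dots> = (\<integral>z. f (fst z) (snd z) \<partial>LM) - phi / 2 * (\<integral>z. (Xproc X0 p (fst z) (snd z))\<^sup>2 \<partial>LM)
      - rho / 2 * (\<integral>\<omega>. (Xproc X0 p T \<omega>)\<^sup>2 \<partial>M)"
    using LxM.integral_snd[OF f_int] LxM.integral_snd[OF X2_int] by (simp add: X2_def case_prod_beta')
  finally show ?thesis
    unfolding J_def f_eq by simp
qed

lemma J_strongly_concave:
  assumes A: "A_version M F T h h' G g Aop" and mono: "monotone_op M F T Aop"
    and u: "u \<in> L2 M F T" and v: "v \<in> L2 M F T" and \<theta>: "0 \<le> \<theta>" "\<theta> \<le> 1"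
    and phi: "phi \<ge> 0" and rho: "rho \<ge> 0"
  shows "\<theta> * J M T X0 gam phi rho S alpha h G g u + (1 - \<theta>) * J M T X0 gam phi rho S alpha h G g v
      + gam * \<theta> * (1 - \<theta>) / 2 * (\<integral>z. (pdiff u v (fst z) (snd z))\<^sup>2 \<partial>LM)
    \<le> J M T X0 gam phi rho S alpha h G g (pconv \<theta> u v)"
proof -
  note p = L2_pconv[OF u v]
  have linear: "(\<integral>z. alpha (fst z) (snd z) * pconv \<theta> u v (fst z) (snd z) \<partial>LM)
      = \<theta> * (\<integral>z. alpha (fst z) (snd z) * u (fst z) (snd z) \<partial>LM)
        + (1 - \<theta>) * (\<integral>z. alpha (fst z) (snd z) * v (fst z) (snd z) \<partial>LM)"
    using integrable_mult_sq_integrable[OF alpha sq_integrable_L2[OF u]]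
      integrable_mult_sq_integrable[OF alpha sq_integrable_L2[OF v]]
    by (simp add: distrib_left mult.left_commute)
  have quadratic: "(\<integral>z. (pconv \<theta> u v (fst z) (snd z))\<^sup>2 \<partial>LM)
      = \<theta> * (\<integral>z. (u (fst z) (snd z))\<^sup>2 \<partial>LM) + (1 - \<theta>) * (\<integral>z. (v (fst z) (snd z))\<^sup>2 \<partial>LM)
        - \<theta> * (1 - \<theta>) * (\<integral>z. (pdiff u v (fst z) (snd z))\<^sup>2 \<partial>LM)"
    using sq_integrable_L2[OF u] sq_integrable_L2[OF v] sq_integrable_L2[OF L2_pdiff[OF u v]]
    by (simp add: power2_convex_comb sq_integrable_def)
  define Xsq where "Xsq q = (\<integral>z. (Xproc X0 q (fst z) (snd z))\<^sup>2 \<partial>LM)" for q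
  define XTsq where "XTsq q = (\<integral>\<omega>. (Xproc X0 q T \<omega>)\<^sup>2 \<partial>M)" for q
  have "J M T X0 gam phi rho S alpha h G g (pconv \<theta> u v)
      = \<theta> * J M T X0 gam phi rho S alpha h G g u + (1 - \<theta>) * J M T X0 gam phi rho S alpha h G g v
        + gam * \<theta> * (1 - \<theta>) / 2 * (\<integral>z. (pdiff u v (fst z) (snd z))\<^sup>2 \<partial>LM)
        + (\<theta> * impact u + (1 - \<theta>) * impact v - impact (pconv \<theta> u v))
        + phi / 2 * (\<theta> * Xsq u + (1 - \<theta>) * Xsq v - Xsq (pconv \<theta> u v))
        + rho / 2 * (\<theta> * XTsq u + (1 - \<theta>) * XTsq v - XTsq (pconv \<theta> u v))"
    unfolding J_eq[OF u] J_eq[OF v] J_eq[OF p] linear quadratic Xsq_def XTsq_def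
    by (simp add: field_simps)
  moreover have "impact (pconv \<theta> u v) \<le> \<theta> * impact u + (1 - \<theta>) * impact v"
    by (rule impact_pconv_le[OF A mono u v \<theta>])
  moreover have "0 \<le> phi / 2 * (\<theta> * Xsq u + (1 - \<theta>) * Xsq v - Xsq (pconv \<theta> u v))"
    using phi integral_Xproc_square_pconv_le[OF u v \<theta>] by (simp add: Xsq_def)
  moreover have "0 \<le> rho / 2 * (\<theta> * XTsq u + (1 - \<theta>) * XTsq v - XTsq (pconv \<theta> u v))"
    using rho integral_Xproc_T_square_pconv_le[OF u v \<theta>] by (simp add: XTsq_def)
  ultimately show ?thesis by linarith
qed

end

theorem mainTheorem10:
  fixes M :: "'a measure" and F :: "real \<Rightarrow> 'a measure" and T :: real
    and X0 gam phi rho :: real and S g alpha :: "'a proc"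
    and G :: "real \<Rightarrow> real \<Rightarrow> real" and h h' :: "real \<Rightarrow> real"
    and Aop :: "'a proc \<Rightarrow> 'a proc"
  assumes T_pos: "T > 0"
    and filt: "filtered_prob_space M F T"
    and usual: "usual_conditions M F T"
    and X0_pos: "X0 > 0" and gam_pos: "gam > 0" and phi_nn: "phi \<ge> 0" and rho_nn: "rho \<ge> 0"
    and S_L2: "S \<in> L2 M F T"
    and ST_meas: "S T \<in> borel_measurable (F T)"
    and ST_sq: "integrable M (\<lambda>\<omega>. (S T \<omega>)\<^sup>2)"
    and g_L2: "g \<in> L2 M F T"
    and alpha: "alpha_version M F T S alpha"
    and G_adm: "admissible_kernel T G"
    and h_deriv: "\<And>x. (h has_real_derivative h' x) (at x)"
    and h'_bdd: "\<exists>C. \<forall>x. \<bar>h' x\<bar> \<le> C"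
    and A_ver: "A_version M F T h h' G g Aop"
  shows "(\<forall>u\<in>L2 M F T. ip M T u (volt (Hker T phi rho) u) \<ge> 0)
    \<and> (monotone_op M F T Aop \<longrightarrow>
        (\<forall>u\<in>L2 M F T. \<forall>v\<in>L2 M F T. \<forall>\<theta>\<in>{0<..<1::real}.
           J M T X0 gam phi rho S alpha h G g (padd (pscale \<theta> u) (pscale (1 - \<theta>) v))
             \<ge> \<theta> * J M T X0 gam phi rho S alpha h G g u
               + (1 - \<theta>) * J M T X0 gam phi rho S alpha h G g v
               + gam * \<theta> * (1 - \<theta>) / 2 * (nrm M T (pdiff u v))\<^sup>2))"
proof -
  interpret filtered_horizon M F T using T_pos filt by unfold_locales
  have H_psd: "\<forall>u\<in>L2 M F T. ip M T u (volt (Hker T phi rho) u) \<ge> 0"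
    using ip_volt_Hker_nonneg phi_nn rho_nn by blast
  obtain B where B: "\<And>x. \<bar>h' x\<bar> \<le> B" using h'_bdd by blast
  obtain C where "square_bounded_kernel G C"
    using G_adm unfolding admissible_kernel_def square_bounded_kernel_def by blast
  then interpret execution_model M F T h h' B G C g alpha
    using h_deriv B g_L2 sq_integrable_alpha[OF S_L2 ST_meas ST_sq alpha]
    by unfold_locales auto
  have "J M T X0 gam phi rho S alpha h G g (pconv \<theta> u v)
      \<ge> \<theta> * J M T X0 gam phi rho S alpha h G g u + (1 - \<theta>) * J M T X0 gam phi rho S alpha h G g v
        + gam * \<theta> * (1 - \<theta>) / 2 * (nrm M T (pdiff u v))\<^sup>2"
    if "monotone_op M F T Aop" "u \<in> L2 M F T" "v \<in> L2 M F T" "\<theta> \<in> {0<..<1}" for u v \<theta>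
    using J_strongly_concave[OF A_ver that(1-3), of \<theta>] that(4) phi_nn rho_nn
    by (simp add: nrm_power2_eq_integral_LM)
  with H_psd show ?thesis by (simp add: pconv_def)
qed

end
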